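(* For every $n\ge 0$, the numbers $\big(\mathbb{E}[\xi_n(p)^2]\big)_{p\in\{0,x,y,z\}^N}$ form a probability distribution on $\{0,x,y,z\}^N$, and for every $p\in\{0,x,y,z\}^N$, $$\mathbb{E}[\xi_{n+1}(p)^2]=\sum_{q\in\{0,x,y,z\}^N}P(q,p)\,\mathbb{E}[\xi_n(q)^2],$$ where $$P(q,p)=\frac{1}{N(N-1)}\sum_{(c,t)}\ w(q_c,\hat p_c)\,w(q_t,\hat p_t)\prod_{i\notin\{c,t\}}\delta_{q_i,p_i},$$ the sum running over all ordered pairs $(c,t)$ of distinct indices in $\{1,\dots,N\}$. In fact, conditionally on $|\psi_n\rangle$ and on the chosen pair $(c,t)$ of the $(n+1)$-st gate, $\mathbb{E}[\xi_{n+1}(p)^2\mid \psi_n,c,t]=\sum_q w(q_c,\hat p_c)w(q_t,\hat p_t)\prod_{i\notin\{c,t\}}\delta_{q_i,p_i}\,\xi_n(q)^2$.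
   Context: Random circuit: $C_n=W_n\cdots W_1$ on $N\ge 2$ qubits, where the $W_i$ are i.i.d.: an ordered pair $(c,t)$ of distinct indices in $\{1,\dots,N\}$ is chosen uniformly at random; independently $U,V$ are Haar-random in $U(2)$; $W=\mathrm{CNOT}[c,t]\,U[c]\,V[t]$ ($U$ acting on qubit $c$, $V$ on qubit $t$, CNOT with control $c$ and target $t$). $|\psi_n\rangle=C_n|\psi_0\rangle$ for an arbitrary initial pure state $|\psi_0\rangle$. Pauli notation: $\sigma^0=I$, $\sigma^x,\sigma^y,\sigma^z$ the Pauli matrices, $\sigma^{p_i}[i]$ the Pauli acting on qubit $i$; for $p\in\{0,x,y,z\}^N$, $\xi_n(p)=2^{-N/2}\,\mathrm{Tr}\big(\bigotimes_{i=1}^N\sigma^{p_i}[i]\,|\psi_n\rangle\langle\psi_n|\big)$, so that $|\psi_n\rangle\langle\psi_n|=\sum_p \xi_n(p)2^{-N/2}\bigotimes_i\sigma^{p_i}[i]$. For given $(c,t)$ and $p$, $(\hat p_c,\hat p_t)\in\{0,x,y,z\}^2$ is the unique pair with $\mathrm{CNOT}[c,t]\,\sigma^{p_c}[c]\sigma^{p_t}[t]\,\mathrm{CNOT}[c,t]=\pm\sigma^{\hat p_c}[c]\sigma^{\hat p_t}[t]$. The weight $w:\{0,x,y,z\}^2\to\mathbb{R}$ is $w(0,0)=1$, $w(a,b)=1/3$ if $a\ne0$ and $b\ne 0$, and $w(a,b)=0$ if exactly one of $a,b$ is $0$. $\delta$ is the Kronecker delta. *)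

theory Defs
  imports "HOL-Probability.Probability"
begin

text \<open>Computational basis states of N qubits are
  bit assignments b :: nat => bool that are False outside {1..N}
  (False = |0>, True = |1>).\<close>

definition bits :: "nat \<Rightarrow> (nat \<Rightarrow> bool) set" where
  "bits N = {b. \<forall>i. i \<notin> {1..N} \<longrightarrow> \<not> b i}"

type_synonym state = "(nat \<Rightarrow> bool) \<Rightarrow> complex"
type_synonym op = "(nat \<Rightarrow> bool) \<Rightarrow> (nat \<Rightarrow> bool) \<Rightarrow> complex"

definition normalized :: "nat \<Rightarrow> state \<Rightarrow> bool" where
  "normalized N \<psi> \<longleftrightarrow> (\<Sum>b\<in>bits N. (cmod (\<psi> b))\<^sup>2) = 1"

definition op_mult :: "nat \<Rightarrow> op \<Rightarrow> op \<Rightarrow> op" where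
  "op_mult N A B = (\<lambda>b b'. \<Sum>b''\<in>bits N. A b b'' * B b'' b')"

definition mat_vec :: "nat \<Rightarrow> op \<Rightarrow> state \<Rightarrow> state" where
  "mat_vec N M \<psi> = (\<lambda>b. \<Sum>b'\<in>bits N. M b b' * \<psi> b')"

datatype pauli = P0 | PX | PY | PZ

text \<open>Single-qubit Pauli matrix entries, row index first.\<close>
fun sigma :: "pauli \<Rightarrow> bool \<Rightarrow> bool \<Rightarrow> complex" where
  "sigma P0 r s = (if r = s then 1 else 0)"
| "sigma PX r s = (if r \<noteq> s then 1 else 0)"
| "sigma PY r s = (if r = s then 0 else if r then \<i> else - \<i>)"
| "sigma PZ r s = (if r = s then (if r then -1 else 1) else 0)"

definition paulis :: "nat \<Rightarrow> (nat \<Rightarrow> pauli) set" where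
  "paulis N = {p. \<forall>i. i \<notin> {1..N} \<longrightarrow> p i = P0}"

definition pauli_op :: "nat \<Rightarrow> (nat \<Rightarrow> pauli) \<Rightarrow> op" where
  "pauli_op N p = (\<lambda>b b'. \<Prod>i\<in>{1..N}. sigma (p i) (b i) (b' i))"

text \<open>xi_n(p) = 2^(-N/2) Tr(P |psi><psi|); this trace is real (P Hermitian),
  we take its real part.\<close>
definition xi :: "nat \<Rightarrow> (nat \<Rightarrow> pauli) \<Rightarrow> state \<Rightarrow> real" where
  "xi N p \<psi> = 2 powr (- real N / 2) *
     Re (\<Sum>b\<in>bits N. \<Sum>b'\<in>bits N. pauli_op N p b b' * (\<psi> b' * cnj (\<psi> b)))"

type_synonym mat2 = "complex ^ bool ^ bool"

definition cadj :: "mat2 \<Rightarrow> mat2" where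
  "cadj A = (\<chi> i j. cnj (A $ j $ i))"

definition unitary2 :: "mat2 \<Rightarrow> bool" where
  "unitary2 A \<longleftrightarrow> A ** cadj A = mat 1"

text \<open>Haar measure on U(2): a Borel probability measure concentrated on the
  unitary matrices and invariant under left multiplication by unitaries
  (unique, so quantifying over such measures is the same as taking Haar).\<close>
definition is_haar :: "mat2 measure \<Rightarrow> bool" where
  "is_haar \<mu> \<longleftrightarrow> prob_space \<mu> \<and> sets \<mu> = sets borel \<and> (AE U in \<mu>. unitary2 U) \<and>
     (\<forall>G. unitary2 G \<longrightarrow> distr \<mu> borel (\<lambda>U. G ** U) = \<mu>)"

definition single_op :: "nat \<Rightarrow> nat \<Rightarrow> mat2 \<Rightarrow> op" where
  "single_op N i A = (\<lambda>b b'. A $ b i $ b' i *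
      (if \<forall>j\<in>{1..N} - {i}. b j = b' j then 1 else 0))"

definition cnot_op :: "nat \<Rightarrow> nat \<Rightarrow> op" where
  "cnot_op c t = (\<lambda>b b'. if b = b'(t := (b' t \<noteq> b' c)) then 1 else 0)"

definition gate_op :: "nat \<Rightarrow> nat \<Rightarrow> nat \<Rightarrow> mat2 \<Rightarrow> mat2 \<Rightarrow> op" where
  "gate_op N c t U V = op_mult N (cnot_op c t) (op_mult N (single_op N c U) (single_op N t V))"

definition pairs :: "nat \<Rightarrow> (nat \<times> nat) set" where
  "pairs N = {(c, t). c \<in> {1..N} \<and> t \<in> {1..N} \<and> c \<noteq> t}"

type_synonym gate = "(nat \<times> nat) \<times> mat2 \<times> mat2"

definition gateM :: "nat \<Rightarrow> mat2 measure \<Rightarrow> gate measure" where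
  "gateM N \<mu> = measure_pmf (pmf_of_set (pairs N)) \<Otimes>\<^sub>M (\<mu> \<Otimes>\<^sub>M \<mu>)"

text \<open>i.i.d. sequence of gates W_1, W_2, ... (omega k is W_(k+1)).\<close>
definition circM :: "nat \<Rightarrow> mat2 measure \<Rightarrow> (nat \<Rightarrow> gate) measure" where
  "circM N \<mu> = PiM UNIV (\<lambda>_. gateM N \<mu>)"

definition apply_gate :: "nat \<Rightarrow> gate \<Rightarrow> state \<Rightarrow> state" where
  "apply_gate N g \<psi> = mat_vec N (gate_op N (fst (fst g)) (snd (fst g)) (fst (snd g)) (snd (snd g))) \<psi>"

fun psi :: "nat \<Rightarrow> state \<Rightarrow> (nat \<Rightarrow> gate) \<Rightarrow> nat \<Rightarrow> state" where
  "psi N \<psi>0 \<omega> 0 = \<psi>0"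
| "psi N \<psi>0 \<omega> (Suc n) = apply_gate N (\<omega> n) (psi N \<psi>0 \<omega> n)"

definition Exi2 :: "nat \<Rightarrow> mat2 measure \<Rightarrow> state \<Rightarrow> nat \<Rightarrow> (nat \<Rightarrow> pauli) \<Rightarrow> real" where
  "Exi2 N \<mu> \<psi>0 n p = (\<integral>\<omega>. (xi N p (psi N \<psi>0 \<omega> n))\<^sup>2 \<partial>circM N \<mu>)"

definition wt :: "pauli \<Rightarrow> pauli \<Rightarrow> real" where
  "wt a b = (if a = P0 \<and> b = P0 then 1 else if a \<noteq> P0 \<and> b \<noteq> P0 then 1/3 else 0)"

definition two_pauli :: "nat \<Rightarrow> nat \<Rightarrow> pauli \<Rightarrow> pauli \<Rightarrow> (nat \<Rightarrow> pauli)" where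
  "two_pauli c t a b = (\<lambda>i. if i = c then a else if i = t then b else P0)"

definition phat :: "nat \<Rightarrow> nat \<Rightarrow> nat \<Rightarrow> (nat \<Rightarrow> pauli) \<Rightarrow> pauli \<times> pauli" where
  "phat N c t p = (THE ab. \<exists>s\<in>{1, -1::complex}. \<forall>b\<in>bits N. \<forall>b'\<in>bits N.
     op_mult N (op_mult N (cnot_op c t) (pauli_op N (two_pauli c t (p c) (p t)))) (cnot_op c t) b b'
       = s * pauli_op N (two_pauli c t (fst ab) (snd ab)) b b')"

definition kron :: "pauli \<Rightarrow> pauli \<Rightarrow> real" where
  "kron a b = (if a = b then 1 else 0)"

definition Pct :: "nat \<Rightarrow> nat \<Rightarrow> nat \<Rightarrow> (nat \<Rightarrow> pauli) \<Rightarrow> (nat \<Rightarrow> pauli) \<Rightarrow> real" where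
  "Pct N c t q p = wt (q c) (fst (phat N c t p)) * wt (q t) (snd (phat N c t p)) *
     (\<Prod>i\<in>{1..N} - {c, t}. kron (q i) (p i))"

definition Ptrans :: "nat \<Rightarrow> (nat \<Rightarrow> pauli) \<Rightarrow> (nat \<Rightarrow> pauli) \<Rightarrow> real" where
  "Ptrans N q p = 1 / (real N * (real N - 1)) * (\<Sum>(c, t)\<in>pairs N. Pct N c t q p)"

end

theory Submission
  imports Defs
begin

text \<open>In the Heisenberg picture a gate \<open>CNOT[c,t] U[c] V[t]\<close> maps Pauli strings to Pauli
  strings: conjugation by CNOT permutes the letter pairs at \<open>(c,t)\<close> up to sign, and conjugation
  by \<open>U\<close> and \<open>V\<close> mixes letters through the adjoint representations \<open>R(U)\<close>, \<open>R(V)\<close>, which are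
  real orthogonal of the form \<open>1 \<oplus> SO(3)\<close>. So \<open>\<xi>\<^sub>n\<^sub>+\<^sub>1(p)\<close> is a bilinear form in \<open>R(U)\<close>, \<open>R(V)\<close>
  applied to the values of \<open>\<xi>\<^sub>n\<close> at the strings that differ from \<open>p\<close> only at \<open>c\<close> and \<open>t\<close>.
  Squaring and integrating against Haar measure only needs the second moments
  \<open>E[R\<^sub>a\<^sub>b R\<^sub>a\<^sub>d] = \<delta>\<^sub>b\<^sub>d w(a,b)\<close>: left invariance under a Clifford unitary cycling
  \<open>X \<rightarrow> Y \<rightarrow> Z\<close> makes the rows \<open>x, y, z\<close> equally distributed, and orthogonality of \<open>R(U)\<close>
  fixes their sum. Averaging over the pair and using independence of the gates gives the Markov
  recursion; \<open>P\<close> is stochastic, and \<open>\<Sum>\<^sub>p \<xi>\<^sub>0(p)\<^sup>2 = 1\<close> is Parseval's identity for the Pauli basis.\<close>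

lemma UNIV_pauli: "(UNIV::pauli set) = {P0, PX, PY, PZ}"
  using pauli.exhaust by auto

instance pauli :: finite
  by standard (simp add: UNIV_pauli)

lemma sum_UNIV_pauli: "(\<Sum>a\<in>UNIV. f a) = f P0 + f PX + f PY + f PZ"
  by (simp add: UNIV_pauli ac_simps)

lemma sum_UNIV_bool: "(\<Sum>x\<in>(UNIV::bool set). f x) = f False + f True"
  by (simp add: UNIV_bool)

lemma cnj_sigma: "cnj (sigma a k l) = sigma a l k"
  by (cases a) auto

definition pauli_coord :: "(bool \<Rightarrow> bool \<Rightarrow> complex) \<Rightarrow> pauli \<Rightarrow> complex" where
  "pauli_coord A b = (\<Sum>i\<in>UNIV. \<Sum>j\<in>UNIV. sigma b j i * A i j) / 2"

lemma pauli_expansion: "A x x' = (\<Sum>b\<in>UNIV. pauli_coord A b * sigma b x x')"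
  unfolding pauli_coord_def
  by (cases x; cases x') (simp_all add: sum_UNIV_pauli sum_UNIV_bool field_simps)

definition pauli_conj :: "mat2 \<Rightarrow> pauli \<Rightarrow> bool \<Rightarrow> bool \<Rightarrow> complex" where
  "pauli_conj U a i j = (\<Sum>k\<in>UNIV. \<Sum>l\<in>UNIV. cnj (U$k$i) * sigma a k l * U$l$j)"

text \<open>\<open>U\<^sup>\<dagger> \<sigma>\<^sup>a U = \<Sum>\<^sub>b R\<^sub>a\<^sub>b(U) \<sigma>\<^sup>b\<close>: the coefficients form the real orthogonal
  adjoint representation \<open>R(U) = 1 \<oplus> SO(3)\<close> of a unitary \<open>U\<close>.\<close>

definition adj_coeff :: "mat2 \<Rightarrow> pauli \<Rightarrow> pauli \<Rightarrow> complex" where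
  "adj_coeff U a b = pauli_coord (pauli_conj U a) b"

definition adj_rep :: "mat2 \<Rightarrow> pauli \<Rightarrow> pauli \<Rightarrow> real" where
  "adj_rep U a b = Re (adj_coeff U a b)"

lemma pauli_conj_expansion: "pauli_conj U a x x' = (\<Sum>b\<in>UNIV. adj_coeff U a b * sigma b x x')"
  unfolding adj_coeff_def by (rule pauli_expansion)

lemma adj_coeff_real: "adj_coeff U a b = complex_of_real (adj_rep U a b)"
proof -
  have "cnj (adj_coeff U a b) = adj_coeff U a b"
    unfolding adj_coeff_def pauli_coord_def pauli_conj_def
    by (simp add: sum_UNIV_bool cnj_sigma algebra_simps)
  then show ?thesis
    unfolding adj_rep_def by (metis Reals_cnj_iff of_real_Re)
qed

fun cnot_pauli :: "pauli \<Rightarrow> pauli \<Rightarrow> pauli \<times> pauli" where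
  "cnot_pauli P0 P0 = (P0, P0)" | "cnot_pauli P0 PX = (P0, PX)"
| "cnot_pauli P0 PY = (PZ, PY)" | "cnot_pauli P0 PZ = (PZ, PZ)"
| "cnot_pauli PX P0 = (PX, PX)" | "cnot_pauli PX PX = (PX, P0)"
| "cnot_pauli PX PY = (PY, PZ)" | "cnot_pauli PX PZ = (PY, PY)"
| "cnot_pauli PY P0 = (PY, PX)" | "cnot_pauli PY PX = (PY, P0)"
| "cnot_pauli PY PY = (PX, PZ)" | "cnot_pauli PY PZ = (PX, PY)"
| "cnot_pauli PZ P0 = (PZ, P0)" | "cnot_pauli PZ PX = (PZ, PX)"
| "cnot_pauli PZ PY = (P0, PY)" | "cnot_pauli PZ PZ = (P0, PZ)"

fun cnot_sign :: "pauli \<Rightarrow> pauli \<Rightarrow> real" where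
  "cnot_sign PX PZ = -1" | "cnot_sign PY PY = -1" | "cnot_sign _ _ = 1"

lemma cnot_sign_sq: "(cnot_sign a a')\<^sup>2 = 1"
  by (cases a; cases a') simp_all

lemma cnot_sign_cases: "complex_of_real (cnot_sign a a') \<in> {1, -1}"
  by (cases a; cases a') simp_all

lemma sigma_cnot_shift:
  "sigma a x1 x2 * sigma a' (y1 \<noteq> x1) (y2 \<noteq> x2)
     = cnot_sign a a' * sigma (fst (cnot_pauli a a')) x1 x2 * sigma (snd (cnot_pauli a a')) y1 y2"
  by (cases a; cases a'; cases x1; cases x2; cases y1; cases y2) auto

lemma sigma_cnot_conj:
  "(\<Sum>x''\<in>UNIV. \<Sum>y''\<in>UNIV. (\<Sum>x3\<in>UNIV. \<Sum>y3\<in>UNIV.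
      (if x = x3 \<and> y = (y3 \<noteq> x3) then 1 else 0) * (sigma a x3 x'' * sigma a' y3 y'')) *
      (if x'' = x' \<and> y'' = (y' \<noteq> x') then 1 else 0))
   = cnot_sign a a' * (sigma (fst (cnot_pauli a a')) x x' * sigma (snd (cnot_pauli a a')) y y')"
  by (cases a; cases a'; cases x; cases x'; cases y; cases y') (simp_all add: sum_UNIV_bool)

lemma two_sigma_unique:
  assumes "s \<in> {1, -1::complex}" "s' \<in> {1, -1::complex}"
    and "\<forall>x y x' y'. s * (sigma a x x' * sigma a' y y') = s' * (sigma d x x' * sigma d' y y')"
  shows "(d, d') = (a, a')"
  using assms by (cases a; cases a'; cases d; cases d') (auto simp: all_bool_eq)

text \<open>Entry \<open>((x,y),(x',y'))\<close> of \<open>CNOT\<cdot>(U \<otimes> V)\<close> on a (control, target) pair of qubits.\<close>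

definition gate2 :: "mat2 \<Rightarrow> mat2 \<Rightarrow> bool \<Rightarrow> bool \<Rightarrow> bool \<Rightarrow> bool \<Rightarrow> complex" where
  "gate2 U V x y x' y' = U$x$x' * V$(y \<noteq> x)$y'"

definition gate2_apply :: "mat2 \<Rightarrow> mat2 \<Rightarrow> (bool \<Rightarrow> bool \<Rightarrow> complex) \<Rightarrow> bool \<Rightarrow> bool \<Rightarrow> complex" where
  "gate2_apply U V \<phi> = (\<lambda>x y. \<Sum>x'\<in>UNIV. \<Sum>y'\<in>UNIV. gate2 U V x y x' y' * \<phi> x' y')"

definition pauli_form2 ::
    "pauli \<Rightarrow> pauli \<Rightarrow> (bool \<Rightarrow> bool \<Rightarrow> complex) \<Rightarrow> (bool \<Rightarrow> bool \<Rightarrow> complex) \<Rightarrow> complex" where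
  "pauli_form2 a a' \<phi> \<eta> = (\<Sum>x\<in>UNIV. \<Sum>y\<in>UNIV. \<Sum>x'\<in>UNIV. \<Sum>y'\<in>UNIV.
      sigma a x x' * sigma a' y y' * \<phi> x' y' * cnj (\<eta> x y))"

lemma gate2_conj_two_sigma:
  "(\<Sum>x1\<in>UNIV. \<Sum>y1\<in>UNIV. \<Sum>x2\<in>UNIV. \<Sum>y2\<in>UNIV.
      cnj (gate2 U V x1 y1 x y) * (sigma a x1 x2 * sigma a' y1 y2) * gate2 U V x2 y2 x' y')
   = cnot_sign a a' * pauli_conj U (fst (cnot_pauli a a')) x x' * pauli_conj V (snd (cnot_pauli a a')) y y'"
proof -
  have "(\<Sum>x1\<in>UNIV. \<Sum>y1\<in>UNIV. \<Sum>x2\<in>UNIV. \<Sum>y2\<in>UNIV.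
      cnj (gate2 U V x1 y1 x y) * (sigma a x1 x2 * sigma a' y1 y2) * gate2 U V x2 y2 x' y')
    = (\<Sum>x1\<in>UNIV. \<Sum>z1\<in>UNIV. \<Sum>x2\<in>UNIV. \<Sum>z2\<in>UNIV. cnj (U$x1$x) * cnj (V$z1$y) *
        (sigma a x1 x2 * sigma a' (z1 \<noteq> x1) (z2 \<noteq> x2)) * (U$x2$x' * V$z2$y'))"
    \<comment> \<open>substitute \<open>z = y \<oplus> x\<close> for the target bits\<close>
    by (simp add: sum_UNIV_bool gate2_def algebra_simps)
  also have "\<dots> = (\<Sum>x1\<in>UNIV. \<Sum>z1\<in>UNIV. \<Sum>x2\<in>UNIV. \<Sum>z2\<in>UNIV. cnj (U$x1$x) * cnj (V$z1$y) *
        (cnot_sign a a' * sigma (fst (cnot_pauli a a')) x1 x2 * sigma (snd (cnot_pauli a a')) z1 z2) *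
        (U$x2$x' * V$z2$y'))"
    by (simp only: sigma_cnot_shift)
  also have "\<dots> = cnot_sign a a' * pauli_conj U (fst (cnot_pauli a a')) x x' *
      pauli_conj V (snd (cnot_pauli a a')) y y'"
    unfolding pauli_conj_def by (simp add: sum_UNIV_bool algebra_simps)
  finally show ?thesis .
qed

lemma sum_sandwich_bool:
  fixes g :: "bool \<Rightarrow> bool \<Rightarrow> bool \<Rightarrow> bool \<Rightarrow> complex"
  shows "(\<Sum>x1\<in>UNIV. \<Sum>y1\<in>UNIV. \<Sum>x2\<in>UNIV. \<Sum>y2\<in>UNIV. m x1 y1 x2 y2 *
      (\<Sum>x'\<in>UNIV. \<Sum>y'\<in>UNIV. g x2 y2 x' y' * \<phi> x' y') * cnj (\<Sum>x\<in>UNIV. \<Sum>y\<in>UNIV. g x1 y1 x y * \<eta> x y))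
   = (\<Sum>x\<in>UNIV. \<Sum>y\<in>UNIV. \<Sum>x'\<in>UNIV. \<Sum>y'\<in>UNIV.
       (\<Sum>x1\<in>UNIV. \<Sum>y1\<in>UNIV. \<Sum>x2\<in>UNIV. \<Sum>y2\<in>UNIV. cnj (g x1 y1 x y) * m x1 y1 x2 y2 * g x2 y2 x' y') *
       \<phi> x' y' * cnj (\<eta> x y))"
  by (simp add: sum_UNIV_bool algebra_simps)

lemma pauli_form2_gate2:
  "pauli_form2 a a' (gate2_apply U V \<phi>) (gate2_apply U V \<eta>) = cnot_sign a a' *
     (\<Sum>b\<in>UNIV. \<Sum>b'\<in>UNIV. adj_coeff U (fst (cnot_pauli a a')) b * adj_coeff V (snd (cnot_pauli a a')) b' *
        pauli_form2 b b' \<phi> \<eta>)"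
proof -
  have "pauli_form2 a a' (gate2_apply U V \<phi>) (gate2_apply U V \<eta>) =
     (\<Sum>x\<in>UNIV. \<Sum>y\<in>UNIV. \<Sum>x'\<in>UNIV. \<Sum>y'\<in>UNIV.
       (\<Sum>x1\<in>UNIV. \<Sum>y1\<in>UNIV. \<Sum>x2\<in>UNIV. \<Sum>y2\<in>UNIV.
          cnj (gate2 U V x1 y1 x y) * (sigma a x1 x2 * sigma a' y1 y2) * gate2 U V x2 y2 x' y') *
       \<phi> x' y' * cnj (\<eta> x y))"
    unfolding pauli_form2_def gate2_apply_def by (rule sum_sandwich_bool)
  also have "\<dots> = (\<Sum>x\<in>UNIV. \<Sum>y\<in>UNIV. \<Sum>x'\<in>UNIV. \<Sum>y'\<in>UNIV.
       (cnot_sign a a' * pauli_conj U (fst (cnot_pauli a a')) x x' * pauli_conj V (snd (cnot_pauli a a')) y y') *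
       \<phi> x' y' * cnj (\<eta> x y))"
    by (simp only: gate2_conj_two_sigma)
  also have "\<dots> = cnot_sign a a' * (\<Sum>b\<in>UNIV. \<Sum>b'\<in>UNIV.
      adj_coeff U (fst (cnot_pauli a a')) b * adj_coeff V (snd (cnot_pauli a a')) b' * pauli_form2 b b' \<phi> \<eta>)"
    unfolding pauli_conj_expansion pauli_form2_def
    by (simp add: sum_UNIV_bool sum_UNIV_pauli algebra_simps)
  finally show ?thesis .
qed

lemma bits_eq_PiE_dflt: "bits N = PiE_dflt {1..N} False (\<lambda>_. UNIV)"
  unfolding bits_def PiE_dflt_def by auto

lemma finite_bits: "finite (bits N)"
  unfolding bits_eq_PiE_dflt by auto

lemma paulis_eq_PiE_dflt: "paulis N = PiE_dflt {1..N} P0 (\<lambda>_. UNIV)"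
  unfolding paulis_def PiE_dflt_def by auto

lemma finite_paulis: "finite (paulis N)"
  unfolding paulis_eq_PiE_dflt by auto

text \<open>A basis state of \<open>N\<close> qubits is split into the bits at \<open>c\<close>, \<open>t\<close> and the rest,
  which is represented with zeros at \<open>c\<close> and \<open>t\<close>.\<close>

definition rest_bits :: "nat \<Rightarrow> nat \<Rightarrow> nat \<Rightarrow> (nat \<Rightarrow> bool) set" where
  "rest_bits N c t = {r \<in> bits N. \<not> r c \<and> \<not> r t}"

definition embed2 :: "nat \<Rightarrow> nat \<Rightarrow> (nat \<Rightarrow> bool) \<Rightarrow> bool \<Rightarrow> bool \<Rightarrow> (nat \<Rightarrow> bool)" where
  "embed2 c t r x y = r(c := x, t := y)"

definition acts_on_pair :: "nat \<Rightarrow> nat \<Rightarrow> nat \<Rightarrow> op \<Rightarrow> (bool \<Rightarrow> bool \<Rightarrow> bool \<Rightarrow> bool \<Rightarrow> complex) \<Rightarrow> bool" where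
  "acts_on_pair N c t A a \<longleftrightarrow> (\<forall>r\<in>rest_bits N c t. \<forall>r'\<in>rest_bits N c t. \<forall>x y x' y'.
      A (embed2 c t r x y) (embed2 c t r' x' y') = (if r = r' then a x y x' y' else 0))"

lemma finite_rest_bits: "finite (rest_bits N c t)"
  using finite_bits unfolding rest_bits_def by auto

lemma rest_bits_eq_iff:
  assumes "r \<in> rest_bits N c t" "r' \<in> rest_bits N c t"
  shows "(\<forall>j\<in>{1..N} - {c, t}. r j = r' j) \<longleftrightarrow> r = r'"
proof
  assume h: "\<forall>j\<in>{1..N} - {c, t}. r j = r' j"
  show "r = r'"
  proof
    fix i show "r i = r' i"
      using h assms by (cases "i \<in> {1..N}"; cases "i = c \<or> i = t") (auto simp: rest_bits_def bits_def)
  qed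
qed simp

locale qubit_pair =
  fixes N c t :: nat
  assumes c_in: "c \<in> {1..N}" and t_in: "t \<in> {1..N}" and c_ne_t: "c \<noteq> t"
begin

lemma embed2_c [simp]: "embed2 c t r x y c = x"
  using c_ne_t by (simp add: embed2_def)

lemma embed2_t [simp]: "embed2 c t r x y t = y"
  by (simp add: embed2_def)

lemma embed2_other [simp]: "i \<noteq> c \<Longrightarrow> i \<noteq> t \<Longrightarrow> embed2 c t r x y i = r i"
  by (simp add: embed2_def)

lemma embed2_in_bits: "r \<in> rest_bits N c t \<Longrightarrow> embed2 c t r x y \<in> bits N"
  using c_in t_in by (auto simp: rest_bits_def embed2_def bits_def)

lemma bits_embed2_cases:
  assumes "b \<in> bits N"
  obtains r x y where "r \<in> rest_bits N c t" "b = embed2 c t r x y"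
proof
  show "b(c := False, t := False) \<in> rest_bits N c t"
    using assms by (auto simp: rest_bits_def bits_def)
  show "b = embed2 c t (b(c := False, t := False)) (b c) (b t)"
    by (auto simp: embed2_def)
qed

lemma embed2_eq_iff:
  assumes "r \<in> rest_bits N c t" "r' \<in> rest_bits N c t"
  shows "embed2 c t r x y = embed2 c t r' x' y' \<longleftrightarrow> r = r' \<and> x = x' \<and> y = y'"
proof
  assume h: "embed2 c t r x y = embed2 c t r' x' y'"
  have "x = x'" "y = y'"
    using fun_cong[OF h, of c] fun_cong[OF h, of t] by simp_all
  moreover have "r = r'"
  proof
    fix i show "r i = r' i"
      using fun_cong[OF h, of i] assms by (cases "i = c \<or> i = t") (auto simp: rest_bits_def)
  qed
  ultimately show "r = r' \<and> x = x' \<and> y = y'" by simp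
qed simp

lemma sum_bits_embed2:
  "(\<Sum>b\<in>bits N. f b) = (\<Sum>r\<in>rest_bits N c t. \<Sum>x\<in>UNIV. \<Sum>y\<in>UNIV. f (embed2 c t r x y))"
proof -
  have bij: "bij_betw (\<lambda>(r, x, y). embed2 c t r x y) (rest_bits N c t \<times> UNIV \<times> UNIV) (bits N)"
    by (rule bij_betwI[where g = "\<lambda>b. (b(c := False, t := False), b c, b t)"])
       (use c_in t_in c_ne_t in \<open>auto simp: rest_bits_def embed2_def bits_def fun_eq_iff\<close>)
  have "(\<Sum>b\<in>bits N. f b) = (\<Sum>(r, x, y)\<in>rest_bits N c t \<times> UNIV \<times> UNIV. f (embed2 c t r x y))"
    using sum.reindex_bij_betw[OF bij, of f] by (simp add: case_prod_beta')
  also have "\<dots> = (\<Sum>r\<in>rest_bits N c t. \<Sum>x\<in>UNIV. \<Sum>y\<in>UNIV. f (embed2 c t r x y))"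
    by (simp add: UNIV_Times_UNIV[symmetric] sum.cartesian_product' del: UNIV_Times_UNIV)
  finally show ?thesis .
qed

lemma acts_on_pair_op_mult:
  assumes A: "acts_on_pair N c t A a" and B: "acts_on_pair N c t B b"
  shows "acts_on_pair N c t (op_mult N A B)
    (\<lambda>x y x' y'. \<Sum>x''\<in>UNIV. \<Sum>y''\<in>UNIV. a x y x'' y'' * b x'' y'' x' y')"
  unfolding acts_on_pair_def
proof (intro ballI allI)
  fix r r' x y x' y' assume r: "r \<in> rest_bits N c t" and r': "r' \<in> rest_bits N c t"
  have "op_mult N A B (embed2 c t r x y) (embed2 c t r' x' y') =
     (\<Sum>r''\<in>rest_bits N c t. \<Sum>x''\<in>UNIV. \<Sum>y''\<in>UNIV.
        A (embed2 c t r x y) (embed2 c t r'' x'' y'') * B (embed2 c t r'' x'' y'') (embed2 c t r' x' y'))"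
    unfolding op_mult_def by (rule sum_bits_embed2)
  also have "\<dots> = (\<Sum>r''\<in>rest_bits N c t. if r'' = r then (if r = r' then
      (\<Sum>x''\<in>UNIV. \<Sum>y''\<in>UNIV. a x y x'' y'' * b x'' y'' x' y') else 0) else 0)"
    by (rule sum.cong[OF refl]) (use A B r r' in \<open>auto simp: acts_on_pair_def\<close>)
  also have "\<dots> = (if r = r' then (\<Sum>x''\<in>UNIV. \<Sum>y''\<in>UNIV. a x y x'' y'' * b x'' y'' x' y') else 0)"
    using r by (simp add: sum.delta' finite_rest_bits)
  finally show "op_mult N A B (embed2 c t r x y) (embed2 c t r' x' y') =
    (if r = r' then (\<Sum>x''\<in>UNIV. \<Sum>y''\<in>UNIV. a x y x'' y'' * b x'' y'' x' y') else 0)" .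
qed

lemma acts_on_pair_mat_vec:
  assumes A: "acts_on_pair N c t A a" and r: "r \<in> rest_bits N c t"
  shows "mat_vec N A \<psi> (embed2 c t r x y) = (\<Sum>x'\<in>UNIV. \<Sum>y'\<in>UNIV. a x y x' y' * \<psi> (embed2 c t r x' y'))"
proof -
  have "mat_vec N A \<psi> (embed2 c t r x y) = (\<Sum>r'\<in>rest_bits N c t. \<Sum>x'\<in>UNIV. \<Sum>y'\<in>UNIV.
      A (embed2 c t r x y) (embed2 c t r' x' y') * \<psi> (embed2 c t r' x' y'))"
    unfolding mat_vec_def by (rule sum_bits_embed2)
  also have "\<dots> = (\<Sum>r'\<in>rest_bits N c t. if r' = r then
      (\<Sum>x'\<in>UNIV. \<Sum>y'\<in>UNIV. a x y x' y' * \<psi> (embed2 c t r x' y')) else 0)"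
    by (rule sum.cong[OF refl]) (use A r in \<open>auto simp: acts_on_pair_def\<close>)
  also have "\<dots> = (\<Sum>x'\<in>UNIV. \<Sum>y'\<in>UNIV. a x y x' y' * \<psi> (embed2 c t r x' y'))"
    using r by (simp add: sum.delta' finite_rest_bits)
  finally show ?thesis .
qed

lemma embed2_agree_off_c:
  assumes r: "r \<in> rest_bits N c t" and r': "r' \<in> rest_bits N c t"
  shows "(\<forall>j\<in>{1..N} - {c}. embed2 c t r x y j = embed2 c t r' x' y' j) \<longleftrightarrow> r = r' \<and> y = y'"
proof
  assume h: "\<forall>j\<in>{1..N} - {c}. embed2 c t r x y j = embed2 c t r' x' y' j"
  then have "y = y'"
    using t_in c_ne_t by (metis Diff_iff embed2_t singletonD)
  moreover have "r = r'"
    unfolding rest_bits_eq_iff[OF r r', symmetric]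
  proof
    fix j assume j: "j \<in> {1..N} - {c, t}"
    with h have "embed2 c t r x y j = embed2 c t r' x' y' j" by blast
    with j show "r j = r' j" by simp
  qed
  ultimately show "r = r' \<and> y = y'" by simp
qed (auto simp: embed2_def)

lemma embed2_agree_off_t:
  assumes r: "r \<in> rest_bits N c t" and r': "r' \<in> rest_bits N c t"
  shows "(\<forall>j\<in>{1..N} - {t}. embed2 c t r x y j = embed2 c t r' x' y' j) \<longleftrightarrow> r = r' \<and> x = x'"
proof
  assume h: "\<forall>j\<in>{1..N} - {t}. embed2 c t r x y j = embed2 c t r' x' y' j"
  then have "x = x'"
    using c_in c_ne_t by (metis Diff_iff embed2_c singletonD)
  moreover have "r = r'"
    unfolding rest_bits_eq_iff[OF r r', symmetric]
  proof
    fix j assume j: "j \<in> {1..N} - {c, t}"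
    with h have "embed2 c t r x y j = embed2 c t r' x' y' j" by blast
    with j show "r j = r' j" by simp
  qed
  ultimately show "r = r' \<and> x = x'" by simp
qed (auto simp: embed2_def)

lemma acts_on_pair_single_op_c:
  "acts_on_pair N c t (single_op N c U) (\<lambda>x y x' y'. if y = y' then U$x$x' else 0)"
  unfolding acts_on_pair_def single_op_def using embed2_agree_off_c by auto

lemma acts_on_pair_single_op_t:
  "acts_on_pair N c t (single_op N t V) (\<lambda>x y x' y'. if x = x' then V$y$y' else 0)"
  unfolding acts_on_pair_def single_op_def using embed2_agree_off_t by auto

lemma acts_on_pair_cnot:
  "acts_on_pair N c t (cnot_op c t) (\<lambda>x y x' y'. if x = x' \<and> y = (y' \<noteq> x') then 1 else 0)"
  unfolding acts_on_pair_def cnot_op_def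
proof (intro ballI allI)
  fix r r' x y x' y' assume r: "r \<in> rest_bits N c t" and r': "r' \<in> rest_bits N c t"
  have "(embed2 c t r' x' y')(t := (embed2 c t r' x' y' t \<noteq> embed2 c t r' x' y' c)) =
      embed2 c t r' x' (y' \<noteq> x')"
    using c_ne_t by (simp add: embed2_def)
  then show "(if embed2 c t r x y = (embed2 c t r' x' y')(t := (embed2 c t r' x' y' t \<noteq> embed2 c t r' x' y' c))
      then 1 else 0) = (if r = r' then if x = x' \<and> y = (y' \<noteq> x') then 1 else 0 else 0)"
    using embed2_eq_iff[OF r r'] by auto
qed

lemma acts_on_pair_gate_op: "acts_on_pair N c t (gate_op N c t U V) (gate2 U V)"
proof -
  have "acts_on_pair N c t (gate_op N c t U V) (\<lambda>x y x' y'. \<Sum>x''\<in>UNIV. \<Sum>y''\<in>UNIV.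
      (if x = x'' \<and> y = (y'' \<noteq> x'') then 1 else 0) *
      (\<Sum>x3\<in>UNIV. \<Sum>y3\<in>UNIV. (if y'' = y3 then U$x''$x3 else 0) * (if x3 = x' then V$y3$y' else 0)))"
    unfolding gate_op_def
    by (intro acts_on_pair_op_mult acts_on_pair_cnot acts_on_pair_single_op_c acts_on_pair_single_op_t)
  moreover have "(\<lambda>x y x' y'. \<Sum>x''\<in>UNIV. \<Sum>y''\<in>UNIV. (if x = x'' \<and> y = (y'' \<noteq> x'') then 1 else 0) *
      (\<Sum>x3\<in>UNIV. \<Sum>y3\<in>UNIV. (if y'' = y3 then U$x''$x3 else 0) * (if x3 = x' then V$y3$y' else 0)))
    = gate2 U V"
    by (intro ext) (simp add: sum_UNIV_bool gate2_def)
  ultimately show ?thesis by simp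
qed

lemma gate_op_embed2:
  "r \<in> rest_bits N c t \<Longrightarrow>
    (\<lambda>x y. mat_vec N (gate_op N c t U V) \<psi> (embed2 c t r x y)) = gate2_apply U V (\<lambda>x y. \<psi> (embed2 c t r x y))"
  unfolding gate2_apply_def by (intro ext acts_on_pair_mat_vec[OF acts_on_pair_gate_op])

definition pauli_rest :: "(nat \<Rightarrow> pauli) \<Rightarrow> (nat \<Rightarrow> bool) \<Rightarrow> (nat \<Rightarrow> bool) \<Rightarrow> complex" where
  "pauli_rest p r r' = (\<Prod>i\<in>{1..N} - {c, t}. sigma (p i) (r i) (r' i))"

lemma pauli_op_embed2:
  "pauli_op N p (embed2 c t r x y) (embed2 c t r' x' y') = pauli_rest p r r' * sigma (p c) x x' * sigma (p t) y y'"
proof -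
  have "{1..N} = insert c (insert t ({1..N} - {c, t}))"
    using c_in t_in by auto
  then have "pauli_op N p b b' = (\<Prod>i\<in>insert c (insert t ({1..N} - {c, t})). sigma (p i) (b i) (b' i))"
    for b b' unfolding pauli_op_def by (rule arg_cong)
  then show ?thesis
    unfolding pauli_rest_def using c_ne_t by (simp add: ac_simps)
qed

lemma pauli_rest_fun_upd: "pauli_rest (p(c := a, t := a')) = pauli_rest p"
  unfolding pauli_rest_def by (intro ext prod.cong) auto

lemma acts_on_pair_two_pauli:
  "acts_on_pair N c t (pauli_op N (two_pauli c t a a')) (\<lambda>x y x' y'. sigma a x x' * sigma a' y y')"
  unfolding acts_on_pair_def
proof (intro ballI allI)
  fix r r' x y x' y' assume r: "r \<in> rest_bits N c t" and r': "r' \<in> rest_bits N c t"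
  have "pauli_rest (two_pauli c t a a') r r' = (\<Prod>i\<in>{1..N} - {c, t}. if r i = r' i then 1 else 0)"
    unfolding pauli_rest_def two_pauli_def by (intro prod.cong) auto
  also have "\<dots> = (if r = r' then 1 else 0)"
    using rest_bits_eq_iff[OF r r'] by auto
  finally show "pauli_op N (two_pauli c t a a') (embed2 c t r x y) (embed2 c t r' x' y') =
      (if r = r' then sigma a x x' * sigma a' y y' else 0)"
    unfolding pauli_op_embed2 using c_ne_t by (simp add: two_pauli_def)
qed

lemma acts_on_pair_cnot_conj_two_pauli:
  "acts_on_pair N c t (op_mult N (op_mult N (cnot_op c t) (pauli_op N (two_pauli c t a a'))) (cnot_op c t))
    (\<lambda>x y x' y'. cnot_sign a a' * (sigma (fst (cnot_pauli a a')) x x' * sigma (snd (cnot_pauli a a')) y y'))"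
  using acts_on_pair_op_mult[OF acts_on_pair_op_mult[OF acts_on_pair_cnot acts_on_pair_two_pauli]
      acts_on_pair_cnot]
  unfolding sigma_cnot_conj .

lemma phat_eq_cnot_pauli: "phat N c t p = cnot_pauli (p c) (p t)"
  unfolding phat_def
proof (rule the_equality)
  let ?CPC = "op_mult N (op_mult N (cnot_op c t) (pauli_op N (two_pauli c t (p c) (p t)))) (cnot_op c t)"
  let ?s = "complex_of_real (cnot_sign (p c) (p t))"
  let ?a = "fst (cnot_pauli (p c) (p t))" and ?a' = "snd (cnot_pauli (p c) (p t))"
  note CPC = acts_on_pair_cnot_conj_two_pauli[of "p c" "p t"]
  show "\<exists>s\<in>{1, -1}. \<forall>b\<in>bits N. \<forall>b'\<in>bits N. ?CPC b b' = s * pauli_op N (two_pauli c t ?a ?a') b b'"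
  proof (intro bexI[OF _ cnot_sign_cases] ballI)
    fix b b' assume "b \<in> bits N" "b' \<in> bits N"
    then show "?CPC b b' = ?s * pauli_op N (two_pauli c t ?a ?a') b b'"
      using CPC acts_on_pair_two_pauli unfolding acts_on_pair_def
      by (elim bits_embed2_cases) simp
  qed
  fix ab
  assume "\<exists>s\<in>{1, -1}. \<forall>b\<in>bits N. \<forall>b'\<in>bits N. ?CPC b b' = s * pauli_op N (two_pauli c t (fst ab) (snd ab)) b b'"
  then obtain s where s: "s \<in> {1, -1}"
    and h: "\<forall>b\<in>bits N. \<forall>b'\<in>bits N. ?CPC b b' = s * pauli_op N (two_pauli c t (fst ab) (snd ab)) b b'"
    by blast
  have r0: "(\<lambda>_. False) \<in> rest_bits N c t"
    by (simp add: rest_bits_def bits_def)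
  have coeffs: "?s * (sigma ?a x x' * sigma ?a' y y') = s * (sigma (fst ab) x x' * sigma (snd ab) y y')"
    for x y x' y'
  proof -
    have "?CPC (embed2 c t (\<lambda>_. False) x y) (embed2 c t (\<lambda>_. False) x' y') =
        s * pauli_op N (two_pauli c t (fst ab) (snd ab)) (embed2 c t (\<lambda>_. False) x y) (embed2 c t (\<lambda>_. False) x' y')"
      using h embed2_in_bits[OF r0] by blast
    then show ?thesis
      using CPC acts_on_pair_two_pauli r0 unfolding acts_on_pair_def by simp
  qed
  have "(fst ab, snd ab) = (?a, ?a')"
    by (rule two_sigma_unique[OF cnot_sign_cases[of "p c" "p t"] s]) (simp add: coeffs)
  then show "ab = cnot_pauli (p c) (p t)"
    by simp
qed

end

lemma sum_rotate3: "(\<Sum>x\<in>A. \<Sum>y\<in>B. \<Sum>z\<in>C. f x y z) = (\<Sum>z\<in>C. \<Sum>x\<in>A. \<Sum>y\<in>B. f x y z)"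
  by (subst sum.swap) (simp only: sum.swap[of _ B])

lemma sum_swap_pairs:
  "(\<Sum>x\<in>A. \<Sum>y\<in>B. \<Sum>z\<in>C. \<Sum>w\<in>D. f x y z w) = (\<Sum>z\<in>C. \<Sum>w\<in>D. \<Sum>x\<in>A. \<Sum>y\<in>B. f x y z w)"
  by (simp only: sum_rotate3[of _ A B] sum.swap[of _ B])

definition pauli_expect :: "nat \<Rightarrow> (nat \<Rightarrow> pauli) \<Rightarrow> state \<Rightarrow> complex" where
  "pauli_expect N p \<psi> = (\<Sum>b\<in>bits N. \<Sum>b'\<in>bits N. pauli_op N p b b' * (\<psi> b' * cnj (\<psi> b)))"

lemma xi_eq_pauli_expect: "xi N p \<psi> = 2 powr (- real N / 2) * Re (pauli_expect N p \<psi>)"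
  unfolding xi_def pauli_expect_def ..

lemma wt_commute: "wt a b = wt b a"
  unfolding wt_def by auto

lemma kron_commute: "kron a b = kron b a"
  unfolding kron_def by auto

context qubit_pair
begin

lemma pauli_expect_split:
  "pauli_expect N p \<psi> = (\<Sum>r\<in>rest_bits N c t. \<Sum>r'\<in>rest_bits N c t. pauli_rest p r r' *
      pauli_form2 (p c) (p t) (\<lambda>x' y'. \<psi> (embed2 c t r' x' y')) (\<lambda>x y. \<psi> (embed2 c t r x y)))"
proof -
  have "pauli_expect N p \<psi> = (\<Sum>r\<in>rest_bits N c t. \<Sum>x\<in>UNIV. \<Sum>y\<in>UNIV. \<Sum>r'\<in>rest_bits N c t.
      \<Sum>x'\<in>UNIV. \<Sum>y'\<in>UNIV. pauli_rest p r r' * sigma (p c) x x' * sigma (p t) y y' *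
        (\<psi> (embed2 c t r' x' y') * cnj (\<psi> (embed2 c t r x y))))"
    unfolding pauli_expect_def sum_bits_embed2 pauli_op_embed2 ..
  also have "\<dots> = (\<Sum>r\<in>rest_bits N c t. \<Sum>r'\<in>rest_bits N c t. \<Sum>x\<in>UNIV. \<Sum>y\<in>UNIV.
      \<Sum>x'\<in>UNIV. \<Sum>y'\<in>UNIV. pauli_rest p r r' * sigma (p c) x x' * sigma (p t) y y' *
        (\<psi> (embed2 c t r' x' y') * cnj (\<psi> (embed2 c t r x y))))"
    by (rule sum.cong[OF refl]) (rule sum_rotate3)
  also have "\<dots> = (\<Sum>r\<in>rest_bits N c t. \<Sum>r'\<in>rest_bits N c t. pauli_rest p r r' *
      pauli_form2 (p c) (p t) (\<lambda>x' y'. \<psi> (embed2 c t r' x' y')) (\<lambda>x y. \<psi> (embed2 c t r x y)))"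
    unfolding pauli_form2_def by (simp add: sum_distrib_left mult_ac)
  finally show ?thesis .
qed

text \<open>Heisenberg picture: the gate maps the Pauli string \<open>p\<close> to the CNOT image of its
  \<open>(c,t)\<close> letters, rotated by the adjoint representations of \<open>U\<close> and \<open>V\<close>.\<close>

lemma pauli_expect_gate_op:
  "pauli_expect N p (mat_vec N (gate_op N c t U V) \<psi>) = cnot_sign (p c) (p t) *
    (\<Sum>b\<in>UNIV. \<Sum>b'\<in>UNIV. adj_coeff U (fst (cnot_pauli (p c) (p t))) b *
       adj_coeff V (snd (cnot_pauli (p c) (p t))) b' * pauli_expect N (p(c := b, t := b')) \<psi>)"
proof -
  let ?a = "fst (cnot_pauli (p c) (p t))" and ?a' = "snd (cnot_pauli (p c) (p t))"
  let ?form = "\<lambda>b b' r r'. pauli_form2 b b' (\<lambda>x' y'. \<psi> (embed2 c t r' x' y')) (\<lambda>x y. \<psi> (embed2 c t r x y))"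
  have "pauli_expect N p (mat_vec N (gate_op N c t U V) \<psi>) =
      (\<Sum>r\<in>rest_bits N c t. \<Sum>r'\<in>rest_bits N c t. \<Sum>b\<in>UNIV. \<Sum>b'\<in>UNIV. cnot_sign (p c) (p t) *
        (adj_coeff U ?a b * adj_coeff V ?a' b' * (pauli_rest p r r' * ?form b b' r r')))"
    unfolding pauli_expect_split
    by (intro sum.cong refl) (simp add: gate_op_embed2 pauli_form2_gate2 sum_distrib_left mult_ac)
  also have "\<dots> = cnot_sign (p c) (p t) * (\<Sum>b\<in>UNIV. \<Sum>b'\<in>UNIV. adj_coeff U ?a b * adj_coeff V ?a' b' *
      (\<Sum>r\<in>rest_bits N c t. \<Sum>r'\<in>rest_bits N c t. pauli_rest p r r' * ?form b b' r r'))"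
    by (subst sum_swap_pairs) (simp add: sum_distrib_left)
  also have "\<dots> = cnot_sign (p c) (p t) *
      (\<Sum>b\<in>UNIV. \<Sum>b'\<in>UNIV. adj_coeff U ?a b * adj_coeff V ?a' b' * pauli_expect N (p(c := b, t := b')) \<psi>)"
    unfolding pauli_expect_split[of "p(c := _, t := _)"] pauli_rest_fun_upd using c_ne_t by simp
  finally show ?thesis .
qed

lemma xi_gate_op:
  "xi N p (mat_vec N (gate_op N c t U V) \<psi>) = cnot_sign (p c) (p t) *
    (\<Sum>b\<in>UNIV. \<Sum>b'\<in>UNIV. adj_rep U (fst (cnot_pauli (p c) (p t))) b *
       adj_rep V (snd (cnot_pauli (p c) (p t))) b' * xi N (p(c := b, t := b')) \<psi>)"
  unfolding xi_eq_pauli_expect pauli_expect_gate_op adj_coeff_real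
  by (simp add: sum_distrib_left mult_ac Re_sum)

lemma sum_paulis_fix_rest:
  assumes p: "p \<in> paulis N"
  shows "(\<Sum>q\<in>paulis N. (\<Prod>i\<in>{1..N} - {c, t}. kron (q i) (p i)) * F q) =
    (\<Sum>a\<in>UNIV. \<Sum>a'\<in>UNIV. F (p(c := a, t := a')))"
proof -
  define upd where "upd = (\<lambda>(a, a'). p(c := a, t := a'))"
  have inj: "inj upd"
  proof (rule injI)
    fix x y assume h: "upd x = upd y"
    show "x = y"
      using fun_cong[OF h, of c] fun_cong[OF h, of t] c_ne_t by (simp add: upd_def prod_eq_iff split_def)
  qed
  have range_sub: "range upd \<subseteq> paulis N"
    using p c_in t_in by (auto simp: paulis_def upd_def)
  have off_range: "(\<Prod>i\<in>{1..N} - {c, t}. kron (q i) (p i)) = 0" if q: "q \<in> paulis N - range upd" for q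
  proof -
    have "q \<noteq> upd (q c, q t)"
      using q by blast
    then obtain i where "q i \<noteq> p i" "i \<noteq> c" "i \<noteq> t"
      by (auto simp: upd_def fun_eq_iff split: if_splits)
    moreover then have "i \<in> {1..N}"
      using q p by (auto simp: paulis_def)
    ultimately show ?thesis
      by (intro prod_zero) (auto simp: kron_def)
  qed
  have "(\<Sum>q\<in>paulis N. (\<Prod>i\<in>{1..N} - {c, t}. kron (q i) (p i)) * F q) =
      (\<Sum>q\<in>range upd. (\<Prod>i\<in>{1..N} - {c, t}. kron (q i) (p i)) * F q)"
    using off_range by (intro sum.mono_neutral_right[OF finite_paulis range_sub]) simp
  also have "\<dots> = (\<Sum>z\<in>UNIV. F (upd z))"
    unfolding sum.reindex[OF inj] comp_def
    by (intro sum.cong refl) (auto simp: upd_def kron_def split: prod.splits intro!: prod.neutral)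
  also have "\<dots> = (\<Sum>a\<in>UNIV. \<Sum>a'\<in>UNIV. F (p(c := a, t := a')))"
    by (simp add: upd_def UNIV_Times_UNIV[symmetric] sum.cartesian_product' del: UNIV_Times_UNIV)
  finally show ?thesis .
qed

lemma sum_Pct_mult:
  assumes p: "p \<in> paulis N"
  shows "(\<Sum>q\<in>paulis N. Pct N c t q p * f q) = (\<Sum>a\<in>UNIV. \<Sum>a'\<in>UNIV.
     wt (fst (cnot_pauli (p c) (p t))) a * wt (snd (cnot_pauli (p c) (p t))) a' * f (p(c := a, t := a')))"
proof -
  have "(\<Sum>q\<in>paulis N. Pct N c t q p * f q) = (\<Sum>q\<in>paulis N. (\<Prod>i\<in>{1..N} - {c, t}. kron (q i) (p i)) *
      (wt (q c) (fst (cnot_pauli (p c) (p t))) * wt (q t) (snd (cnot_pauli (p c) (p t))) * f q))"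
    unfolding Pct_def phat_eq_cnot_pauli by (simp add: mult_ac)
  also have "\<dots> = (\<Sum>a\<in>UNIV. \<Sum>a'\<in>UNIV.
     wt (fst (cnot_pauli (p c) (p t))) a * wt (snd (cnot_pauli (p c) (p t))) a' * f (p(c := a, t := a')))"
    unfolding sum_paulis_fix_rest[OF p] using c_ne_t by (simp add: wt_commute)
  finally show ?thesis .
qed

lemma sum_Pct_eq_1:
  assumes q: "q \<in> paulis N"
  shows "(\<Sum>p\<in>paulis N. Pct N c t q p) = 1"
proof -
  have "(\<Sum>p\<in>paulis N. Pct N c t q p) = (\<Sum>p\<in>paulis N. (\<Prod>i\<in>{1..N} - {c, t}. kron (p i) (q i)) *
      (wt (q c) (fst (cnot_pauli (p c) (p t))) * wt (q t) (snd (cnot_pauli (p c) (p t)))))"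
    unfolding Pct_def phat_eq_cnot_pauli by (simp add: mult_ac kron_commute)
  also have "\<dots> = (\<Sum>a\<in>UNIV. \<Sum>a'\<in>UNIV. wt (q c) (fst (cnot_pauli a a')) * wt (q t) (snd (cnot_pauli a a')))"
    unfolding sum_paulis_fix_rest[OF q] using c_ne_t by simp
  also have "\<dots> = 1"
    by (cases "q c"; cases "q t") (simp_all add: sum_UNIV_pauli wt_def)
  finally show ?thesis .
qed

lemma Pct_nonneg: "Pct N c t q p \<ge> 0"
  unfolding Pct_def wt_def kron_def by (intro mult_nonneg_nonneg prod_nonneg) auto

end

lemma unitary2_rows_orthonormal:
  "unitary2 U \<Longrightarrow> (\<Sum>k\<in>UNIV. U$i$k * cnj (U$j$k)) = (if i = j then 1 else 0)"
  unfolding unitary2_def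
  by (drule arg_cong[where f = "\<lambda>M. M $ i $ j"]) (simp add: matrix_matrix_mult_def cadj_def mat_def)

lemma unitary2_cols_orthonormal:
  "unitary2 U \<Longrightarrow> (\<Sum>k\<in>UNIV. cnj (U$k$i) * U$k$j) = (if i = j then 1 else 0)"
  unfolding unitary2_def
  by (drule matrix_left_right_inverse1, drule arg_cong[where f = "\<lambda>M. M $ i $ j"])
     (simp add: matrix_matrix_mult_def cadj_def mat_def)

lemma adj_coeff_P0:
  assumes "unitary2 U"
  shows "adj_coeff U P0 b = (if b = P0 then 1 else 0)"
proof -
  have "pauli_conj U P0 i j = (if i = j then 1 else 0)" for i j
    unfolding pauli_conj_def using unitary2_cols_orthonormal[OF assms, of i j] by (simp add: sum_UNIV_bool)
  then show ?thesis
    unfolding adj_coeff_def pauli_coord_def by (cases b) (simp_all add: sum_UNIV_bool)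
qed

lemma adj_coeff_to_P0:
  assumes "unitary2 U" "a \<noteq> P0"
  shows "adj_coeff U a P0 = 0"
proof -
  have "adj_coeff U a P0 = (\<Sum>k\<in>UNIV. \<Sum>l\<in>UNIV. sigma a k l * (\<Sum>i\<in>UNIV. U$l$i * cnj (U$k$i))) / 2"
    unfolding adj_coeff_def pauli_coord_def pauli_conj_def by (simp add: sum_UNIV_bool algebra_simps)
  also have "\<dots> = 0"
    using assms(2) by (cases a) (simp_all add: unitary2_rows_orthonormal[OF assms(1)] sum_UNIV_bool)
  finally show ?thesis .
qed

text \<open>Orthogonality of the adjoint representation, via \<open>adj_coeff U a b = \<onehalf> tr (\<sigma>\<^sup>a W\<^sub>b)\<close>
  with \<open>W\<^sub>b = U \<sigma>\<^sup>b U\<^sup>\<dagger>\<close> and the Pauli completeness relation.\<close>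

definition pauli_unconj :: "mat2 \<Rightarrow> pauli \<Rightarrow> bool \<Rightarrow> bool \<Rightarrow> complex" where
  "pauli_unconj U b l k = (\<Sum>i\<in>UNIV. \<Sum>j\<in>UNIV. U$l$j * sigma b j i * cnj (U$k$i))"

lemma adj_coeff_eq_trace: "adj_coeff U a b = (\<Sum>k\<in>UNIV. \<Sum>l\<in>UNIV. sigma a k l * pauli_unconj U b l k) / 2"
  unfolding adj_coeff_def pauli_coord_def pauli_conj_def pauli_unconj_def by (simp add: sum_UNIV_bool algebra_simps)

lemma pauli_completeness:
  "(\<Sum>a\<in>UNIV. (\<Sum>k\<in>UNIV. \<Sum>l\<in>UNIV. sigma a k l * A l k) * (\<Sum>k\<in>UNIV. \<Sum>l\<in>UNIV. sigma a k l * B l k))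
     = 2 * (\<Sum>k\<in>UNIV. \<Sum>l\<in>UNIV. A k l * B l k)"
  by (simp add: sum_UNIV_pauli sum_UNIV_bool algebra_simps)

lemma trace_pauli_unconj:
  assumes "unitary2 U"
  shows "(\<Sum>k\<in>UNIV. \<Sum>l\<in>UNIV. pauli_unconj U b k l * pauli_unconj U d l k) = (if b = d then 2 else 0)"
proof -
  have "(\<Sum>k\<in>UNIV. \<Sum>l\<in>UNIV. pauli_unconj U b k l * pauli_unconj U d l k) =
      (\<Sum>i\<in>UNIV. \<Sum>j\<in>UNIV. \<Sum>i'\<in>UNIV. \<Sum>j'\<in>UNIV. sigma b j i * sigma d j' i' *
        (\<Sum>l\<in>UNIV. cnj (U$l$i) * U$l$j') * (\<Sum>k\<in>UNIV. cnj (U$k$i') * U$k$j))"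
    unfolding pauli_unconj_def by (simp add: sum_UNIV_bool algebra_simps)
  then show ?thesis
    unfolding unitary2_cols_orthonormal[OF assms] by (cases b; cases d) (simp_all add: sum_UNIV_bool)
qed

lemma adj_coeff_orthogonal:
  assumes "unitary2 U"
  shows "(\<Sum>a\<in>UNIV. adj_coeff U a b * adj_coeff U a d) = (if b = d then 1 else 0)"
  unfolding adj_coeff_eq_trace times_divide_times_eq sum_divide_distrib[symmetric] pauli_completeness
    trace_pauli_unconj[OF assms] by simp

lemma adj_rep_orthogonal_PXYZ:
  assumes "unitary2 U" "b \<noteq> P0"
  shows "adj_rep U PX b * adj_rep U PX d + adj_rep U PY b * adj_rep U PY d + adj_rep U PZ b * adj_rep U PZ d
    = (if b = d then 1 else 0)"
proof -
  have "complex_of_real (adj_rep U PX b * adj_rep U PX d + adj_rep U PY b * adj_rep U PY d +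
      adj_rep U PZ b * adj_rep U PZ d) = (\<Sum>a\<in>UNIV. adj_coeff U a b * adj_coeff U a d) - adj_coeff U P0 b * adj_coeff U P0 d"
    by (simp add: sum_UNIV_pauli adj_coeff_real)
  also have "\<dots> = (if b = d then 1 else 0)"
    using assms by (simp add: adj_coeff_orthogonal adj_coeff_P0)
  finally show ?thesis
    by (metis of_real_1 of_real_eq_iff of_real_0)
qed

lemma abs_adj_rep_le_1:
  assumes "unitary2 U"
  shows "\<bar>adj_rep U a b\<bar> \<le> 1"
proof -
  have "complex_of_real (\<Sum>a\<in>UNIV. (adj_rep U a b)\<^sup>2) = 1"
    using adj_coeff_orthogonal[OF assms, of b b] by (simp add: adj_coeff_real power2_eq_square)
  then have "(\<Sum>a\<in>UNIV. (adj_rep U a b)\<^sup>2) = 1"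
    using of_real_eq_1_iff by blast
  moreover have "(adj_rep U a b)\<^sup>2 \<le> (\<Sum>a\<in>UNIV. (adj_rep U a b)\<^sup>2)"
    by (rule member_le_sum) auto
  ultimately show ?thesis
    by (simp add: abs_square_le_1)
qed

lemma continuous_on_adj_rep: "continuous_on UNIV (\<lambda>U::mat2. adj_rep U a b)"
  unfolding adj_rep_def adj_coeff_def pauli_coord_def pauli_conj_def by (intro continuous_intros) auto

lemma borel_measurable_adj_rep [measurable]: "(\<lambda>U::mat2. adj_rep U a b) \<in> borel_measurable borel"
  by (rule borel_measurable_continuous_onI[OF continuous_on_adj_rep])

text \<open>A Clifford unitary whose conjugation cycles \<open>X \<rightarrow> Y \<rightarrow> Z \<rightarrow> X\<close>; by Haar invariance it makes
  the second moments of \<open>adj_rep\<close> equal for the three non-identity rows.\<close>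

definition clifford_cycle :: mat2 where
  "clifford_cycle = (\<chi> i j. if i then (if j then (1 - \<i>) / 2 else (-1 + \<i>) / 2) else (1 + \<i>) / 2)"

fun pauli_cycle :: "pauli \<Rightarrow> pauli" where
  "pauli_cycle PX = PY" | "pauli_cycle PY = PZ" | "pauli_cycle PZ = PX" | "pauli_cycle P0 = P0"

lemma unitary2_clifford_cycle: "unitary2 clifford_cycle"
  unfolding unitary2_def
  by (simp add: vec_eq_iff matrix_matrix_mult_def cadj_def mat_def clifford_cycle_def sum_UNIV_bool
      all_bool_eq complex_eq_iff field_simps)

lemma adj_rep_clifford_cycle: "adj_rep (clifford_cycle ** U) a b = adj_rep U (pauli_cycle a) b"
proof -
  have cycle: "(\<Sum>k\<in>UNIV. \<Sum>l\<in>UNIV. cnj (clifford_cycle$k$m) * sigma a k l * clifford_cycle$l$n) =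
      sigma (pauli_cycle a) m n" for m n
    by (cases a; cases m; cases n) (simp_all add: clifford_cycle_def sum_UNIV_bool complex_eq_iff field_simps)
  have "pauli_conj (clifford_cycle ** U) a i j = (\<Sum>m\<in>UNIV. \<Sum>n\<in>UNIV. cnj (U$m$i) *
      (\<Sum>k\<in>UNIV. \<Sum>l\<in>UNIV. cnj (clifford_cycle$k$m) * sigma a k l * clifford_cycle$l$n) * U$n$j)" for i j
    unfolding pauli_conj_def by (simp add: matrix_matrix_mult_def sum_UNIV_bool algebra_simps)
  also have "\<dots> i j = pauli_conj U (pauli_cycle a) i j" for i j
    unfolding cycle pauli_conj_def ..
  finally show ?thesis
    unfolding adj_rep_def adj_coeff_def pauli_coord_def by simp
qed

locale haar =
  fixes \<mu> :: "mat2 measure"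
  assumes is_haar: "is_haar \<mu>"
begin

lemma prob_space_haar: "prob_space \<mu>"
  using is_haar unfolding is_haar_def by blast

lemma sets_haar [measurable_cong]: "sets \<mu> = sets borel"
  using is_haar unfolding is_haar_def by blast

lemma AE_unitary2: "AE U in \<mu>. unitary2 U"
  using is_haar unfolding is_haar_def by blast

lemma integral_left_mult_invariant:
  fixes f :: "mat2 \<Rightarrow> real"
  assumes "unitary2 G" and [measurable]: "f \<in> borel_measurable borel"
  shows "(\<integral>U. f (G ** U) \<partial>\<mu>) = (\<integral>U. f U \<partial>\<mu>)"
proof -
  have "(\<lambda>U. G ** U) \<in> \<mu> \<rightarrow>\<^sub>M borel"
    unfolding measurable_cong_sets[OF sets_haar refl] matrix_matrix_mult_def
    by (intro borel_measurable_continuous_onI continuous_intros)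
  then have "(\<integral>U. f (G ** U) \<partial>\<mu>) = (\<integral>U. f U \<partial>distr \<mu> borel (\<lambda>U. G ** U))"
    by (rule integral_distr[symmetric]) fact
  then show ?thesis
    using is_haar assms(1) unfolding is_haar_def by simp
qed

lemma integrable_adj_rep_mult: "integrable \<mu> (\<lambda>U. adj_rep U a b * adj_rep U a' b')"
proof (rule finite_measure.integrable_const_bound[where B = 1])
  show "finite_measure \<mu>"
    using prob_space_haar prob_space.finite_measure by blast
  show "AE U in \<mu>. norm (adj_rep U a b * adj_rep U a' b') \<le> 1"
    using AE_unitary2 by eventually_elim (simp add: abs_mult mult_le_one abs_adj_rep_le_1)
qed measurable

end

lemma sum_sq_expand: "(\<Sum>b\<in>B. f b * Y b :: real)\<^sup>2 = (\<Sum>b\<in>B. \<Sum>d\<in>B. (f b * f d) * (Y b * Y d))"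
  by (simp add: power2_eq_square sum_product mult_ac)

lemma sum_sum_swap_factor:
  "(\<Sum>b\<in>B. \<Sum>b'\<in>B'. f b * g b' * X b b' :: real) = (\<Sum>b'\<in>B'. g b' * (\<Sum>b\<in>B. f b * X b b'))"
  by (subst sum.swap) (simp add: sum_distrib_left mult_ac)

context haar
begin

lemma integral_adj_rep_mult:
  "(\<integral>U. adj_rep U a b * adj_rep U a d \<partial>\<mu>) = (if b = d then wt a b else 0)"
proof (cases "a = P0")
  case True
  have ae: "AE U in \<mu>. adj_rep U a b * adj_rep U a d = (if b = P0 \<and> d = P0 then 1 else 0)"
    using AE_unitary2 by eventually_elim (simp add: True adj_rep_def adj_coeff_P0)
  have "(\<integral>U. adj_rep U a b * adj_rep U a d \<partial>\<mu>) = (\<integral>U. (if b = P0 \<and> d = P0 then 1 else 0) \<partial>\<mu>)"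
    by (rule integral_cong_AE[OF _ _ ae]) measurable
  then show ?thesis
    by (simp add: prob_space.prob_space[OF prob_space_haar] wt_def True)
next
  case a: False
  show ?thesis
  proof (cases "b = P0 \<or> d = P0")
    case True
    have ae: "AE U in \<mu>. adj_rep U a b * adj_rep U a d = 0"
      using AE_unitary2 by eventually_elim (use True a in \<open>auto simp: adj_rep_def adj_coeff_to_P0\<close>)
    have "(\<integral>U. adj_rep U a b * adj_rep U a d \<partial>\<mu>) = (\<integral>U. 0 \<partial>\<mu>)"
      by (rule integral_cong_AE[OF _ _ ae]) measurable
    then show ?thesis
      using True a by (auto simp: wt_def)
  next
    case False
    define M where "M a = (\<integral>U. adj_rep U a b * adj_rep U a d \<partial>\<mu>)" for a
    have M_cycle: "M (pauli_cycle x) = M x" for x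
    proof -
      have "M (pauli_cycle x) = (\<integral>U. adj_rep (clifford_cycle ** U) x b * adj_rep (clifford_cycle ** U) x d \<partial>\<mu>)"
        by (simp add: M_def adj_rep_clifford_cycle)
      also have "\<dots> = M x"
        unfolding M_def by (rule integral_left_mult_invariant[OF unitary2_clifford_cycle]) measurable
      finally show ?thesis .
    qed
    have ae: "AE U in \<mu>. adj_rep U PX b * adj_rep U PX d + adj_rep U PY b * adj_rep U PY d +
        adj_rep U PZ b * adj_rep U PZ d = (if b = d then 1 else 0)"
      using AE_unitary2 by eventually_elim (use False in \<open>simp add: adj_rep_orthogonal_PXYZ\<close>)
    have "M PX + M PY + M PZ = (\<integral>U. adj_rep U PX b * adj_rep U PX d + adj_rep U PY b * adj_rep U PY d +
        adj_rep U PZ b * adj_rep U PZ d \<partial>\<mu>)"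
      unfolding M_def by (simp add: integrable_adj_rep_mult)
    also have "\<dots> = (\<integral>U. (if b = d then 1 else 0) \<partial>\<mu>)"
      by (rule integral_cong_AE[OF _ _ ae]) measurable
    also have "\<dots> = (if b = d then 1 else 0)"
      by (simp add: prob_space.prob_space[OF prob_space_haar])
    finally have "M PX + M PY + M PZ = (if b = d then 1 else 0)" .
    moreover have "M PX = M PY" "M PY = M PZ"
      using M_cycle[of PX] M_cycle[of PY] by simp_all
    ultimately have "M a = (if b = d then 1/3 else 0)"
      using a by (cases a) auto
    then show ?thesis
      unfolding M_def using a False by (simp add: wt_def)
  qed
qed

lemma integrable_adj_rep_sum_sq: "integrable \<mu> (\<lambda>U. (\<Sum>b\<in>UNIV. adj_rep U a b * Y b)\<^sup>2)"
  unfolding sum_sq_expand by (simp add: integrable_adj_rep_mult)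

lemma integral_adj_rep_sum_sq:
  "(\<integral>U. (\<Sum>b\<in>UNIV. adj_rep U a b * Y b)\<^sup>2 \<partial>\<mu>) = (\<Sum>b\<in>UNIV. wt a b * (Y b)\<^sup>2)"
proof -
  have "(\<integral>U. (\<Sum>b\<in>UNIV. adj_rep U a b * Y b)\<^sup>2 \<partial>\<mu>) =
      (\<Sum>b\<in>UNIV. \<Sum>d\<in>UNIV. (\<integral>U. adj_rep U a b * adj_rep U a d \<partial>\<mu>) * (Y b * Y d))"
    unfolding sum_sq_expand by (simp add: integrable_adj_rep_mult)
  also have "\<dots> = (\<Sum>b\<in>UNIV. \<Sum>d\<in>UNIV. if d = b then wt a b * (Y b * Y d) else 0)"
    unfolding integral_adj_rep_mult by (intro sum.cong refl) simp
  also have "\<dots> = (\<Sum>b\<in>UNIV. wt a b * (Y b)\<^sup>2)"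
    by (simp add: power2_eq_square)
  finally show ?thesis .
qed

lemma integrable_adj_rep2_sum_sq:
  "integrable \<mu> (\<lambda>V. (\<Sum>b\<in>UNIV. \<Sum>b'\<in>UNIV. adj_rep U a b * adj_rep V a' b' * X b b')\<^sup>2)"
  unfolding sum_sum_swap_factor by (rule integrable_adj_rep_sum_sq)

lemma integral_adj_rep2_sum_sq_inner:
  "(\<integral>V. (\<Sum>b\<in>UNIV. \<Sum>b'\<in>UNIV. adj_rep U a b * adj_rep V a' b' * X b b')\<^sup>2 \<partial>\<mu>) =
    (\<Sum>b'\<in>UNIV. wt a' b' * (\<Sum>b\<in>UNIV. adj_rep U a b * X b b')\<^sup>2)"
  unfolding sum_sum_swap_factor by (rule integral_adj_rep_sum_sq)

lemma integrable_adj_rep2_sum_sq_inner: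
  "integrable \<mu> (\<lambda>U. \<integral>V. (\<Sum>b\<in>UNIV. \<Sum>b'\<in>UNIV. adj_rep U a b * adj_rep V a' b' * X b b')\<^sup>2 \<partial>\<mu>)"
  unfolding integral_adj_rep2_sum_sq_inner by (simp add: integrable_adj_rep_sum_sq)

lemma integral_adj_rep2_sum_sq:
  "(\<integral>U. (\<integral>V. (\<Sum>b\<in>UNIV. \<Sum>b'\<in>UNIV. adj_rep U a b * adj_rep V a' b' * X b b')\<^sup>2 \<partial>\<mu>) \<partial>\<mu>) =
    (\<Sum>b\<in>UNIV. \<Sum>b'\<in>UNIV. wt a b * wt a' b' * (X b b')\<^sup>2)"
proof -
  have "(\<integral>U. (\<integral>V. (\<Sum>b\<in>UNIV. \<Sum>b'\<in>UNIV. adj_rep U a b * adj_rep V a' b' * X b b')\<^sup>2 \<partial>\<mu>) \<partial>\<mu>) =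
      (\<Sum>b'\<in>UNIV. wt a' b' * (\<Sum>b\<in>UNIV. wt a b * (X b b')\<^sup>2))"
    unfolding integral_adj_rep2_sum_sq_inner
    by (simp add: integrable_adj_rep_sum_sq integral_adj_rep_sum_sq)
  also have "\<dots> = (\<Sum>b\<in>UNIV. \<Sum>b'\<in>UNIV. wt a b * wt a' b' * (X b b')\<^sup>2)"
    by (subst sum.swap) (simp add: sum_distrib_left mult_ac)
  finally show ?thesis .
qed

lemma nn_integral_adj_rep2_sum_sq:
  "(\<integral>\<^sup>+U. (\<integral>\<^sup>+V. ennreal ((\<Sum>b\<in>UNIV. \<Sum>b'\<in>UNIV. adj_rep U a b * adj_rep V a' b' * X b b')\<^sup>2) \<partial>\<mu>) \<partial>\<mu>) =
    ennreal (\<Sum>b\<in>UNIV. \<Sum>b'\<in>UNIV. wt a b * wt a' b' * (X b b')\<^sup>2)"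
proof -
  have "(\<integral>\<^sup>+V. ennreal ((\<Sum>b\<in>UNIV. \<Sum>b'\<in>UNIV. adj_rep U a b * adj_rep V a' b' * X b b')\<^sup>2) \<partial>\<mu>) =
      ennreal (\<integral>V. (\<Sum>b\<in>UNIV. \<Sum>b'\<in>UNIV. adj_rep U a b * adj_rep V a' b' * X b b')\<^sup>2 \<partial>\<mu>)" for U
    by (rule nn_integral_eq_integral[OF integrable_adj_rep2_sum_sq]) simp
  moreover have "(\<integral>\<^sup>+U. ennreal (\<integral>V. (\<Sum>b\<in>UNIV. \<Sum>b'\<in>UNIV. adj_rep U a b * adj_rep V a' b' * X b b')\<^sup>2 \<partial>\<mu>) \<partial>\<mu>)
      = ennreal (\<integral>U. (\<integral>V. (\<Sum>b\<in>UNIV. \<Sum>b'\<in>UNIV. adj_rep U a b * adj_rep V a' b' * X b b')\<^sup>2 \<partial>\<mu>) \<partial>\<mu>)"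
    by (rule nn_integral_eq_integral[OF integrable_adj_rep2_sum_sq_inner]) simp
  ultimately show ?thesis
    by (simp add: integral_adj_rep2_sum_sq)
qed

end

context qubit_pair
begin

lemma xi_sq_gate_op:
  "(xi N p (mat_vec N (gate_op N c t U V) \<psi>))\<^sup>2 =
    (\<Sum>b\<in>UNIV. \<Sum>b'\<in>UNIV. adj_rep U (fst (cnot_pauli (p c) (p t))) b *
       adj_rep V (snd (cnot_pauli (p c) (p t))) b' * xi N (p(c := b, t := b')) \<psi>)\<^sup>2"
  unfolding xi_gate_op power_mult_distrib cnot_sign_sq by simp

lemma integral_xi_sq_gate_op:
  assumes "haar \<mu>" and "p \<in> paulis N"
  shows "(\<integral>U. (\<integral>V. (xi N p (mat_vec N (gate_op N c t U V) \<psi>))\<^sup>2 \<partial>\<mu>) \<partial>\<mu>) =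
    (\<Sum>q\<in>paulis N. Pct N c t q p * (xi N q \<psi>)\<^sup>2)"
  unfolding xi_sq_gate_op haar.integral_adj_rep2_sum_sq[OF assms(1)] sum_Pct_mult[OF assms(2)] ..

lemma nn_integral_xi_sq_gate_op:
  assumes "haar \<mu>" and "p \<in> paulis N"
  shows "(\<integral>\<^sup>+U. (\<integral>\<^sup>+V. ennreal ((xi N p (mat_vec N (gate_op N c t U V) \<psi>))\<^sup>2) \<partial>\<mu>) \<partial>\<mu>) =
    ennreal (\<Sum>q\<in>paulis N. Pct N c t q p * (xi N q \<psi>)\<^sup>2)"
  unfolding xi_sq_gate_op haar.nn_integral_adj_rep2_sum_sq[OF assms(1)] sum_Pct_mult[OF assms(2)] ..

end

lemma borel_measurable_cnj [measurable]: "cnj \<in> borel_measurable borel"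
  by (intro borel_measurable_continuous_onI continuous_intros)

lemma borel_measurable_mat2_entry [measurable]: "(\<lambda>U::mat2. U $ i $ j) \<in> borel_measurable borel"
  by (intro borel_measurable_continuous_onI continuous_intros)

definition gate_entry :: "nat \<Rightarrow> (nat \<Rightarrow> bool) \<Rightarrow> (nat \<Rightarrow> bool) \<Rightarrow> gate \<Rightarrow> complex" where
  "gate_entry N b b' g = gate_op N (fst (fst g)) (snd (fst g)) (fst (snd g)) (snd (snd g)) b b'"

lemma apply_gate_eq: "apply_gate N g \<psi> b = (\<Sum>b'\<in>bits N. gate_entry N b b' g * \<psi> b')"
  unfolding apply_gate_def mat_vec_def gate_entry_def ..

lemma borel_measurable_gate_entry:
  assumes "sets \<mu> = sets borel"
  shows "gate_entry N b b' \<in> borel_measurable (gateM N \<mu>)"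
proof -
  have "(\<lambda>(U, V). gate_op N c t U V b b') \<in> borel_measurable (borel \<Otimes>\<^sub>M borel)" for c t
    unfolding gate_op_def op_mult_def single_op_def by measurable
  then have "gate_entry N b b' \<in> borel_measurable (count_space UNIV \<Otimes>\<^sub>M (borel \<Otimes>\<^sub>M borel))"
    unfolding gate_entry_def by (intro measurable_pair_measure_countable1) (simp_all add: case_prod_beta')
  moreover have "sets (gateM N \<mu>) = sets (count_space UNIV \<Otimes>\<^sub>M (borel \<Otimes>\<^sub>M borel))"
    unfolding gateM_def using assms by (intro sets_pair_measure_cong) simp_all
  ultimately show ?thesis
    using measurable_cong_sets by blast
qed

lemma borel_measurable_xi:
  assumes [measurable]: "\<And>b. (\<lambda>x. f x b) \<in> borel_measurable M"
  shows "(\<lambda>x. xi N p (f x)) \<in> borel_measurable M"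
  unfolding xi_def by measurable

lemma qubit_pair_if_pairs: "(c, t) \<in> pairs N \<Longrightarrow> qubit_pair N c t"
  unfolding pairs_def qubit_pair_def by auto

lemma finite_pairs: "finite (pairs N)"
  by (rule finite_subset[of _ "{1..N} \<times> {1..N}"]) (auto simp: pairs_def)

lemma card_pairs: "card (pairs N) = N * (N - 1)"
proof -
  have "pairs N = Sigma {1..N} (\<lambda>c. {1..N} - {c})"
    by (auto simp: pairs_def)
  then show ?thesis
    by (simp add: card_SigmaI)
qed

lemma pairs_nonempty: "N \<ge> 2 \<Longrightarrow> pairs N \<noteq> {}"
  unfolding pairs_def by (intro ex_in_conv[THEN iffD1] exI[of _ "(1, 2)"]) simp

lemma prob_space_gateM: "N \<ge> 2 \<Longrightarrow> prob_space \<mu> \<Longrightarrow> prob_space (gateM N \<mu>)"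
  unfolding gateM_def
  by (intro prob_space_pair prob_space_measure_pmf) (simp_all add: pairs_nonempty finite_pairs)

lemma Ptrans_nonneg: "Ptrans N q p \<ge> 0"
  unfolding Ptrans_def
  by (intro mult_nonneg_nonneg sum_nonneg)
     (auto simp: qubit_pair.Pct_nonneg[OF qubit_pair_if_pairs] split: prod.splits, cases N, auto)

lemma sum_Ptrans_mult:
  "N \<ge> 2 \<Longrightarrow> (\<Sum>q\<in>paulis N. Ptrans N q p * f q) =
    (\<Sum>(c, t)\<in>pairs N. \<Sum>q\<in>paulis N. Pct N c t q p * f q) / real (card (pairs N))"
  unfolding Ptrans_def card_pairs
  by (simp add: sum_distrib_right sum_divide_distrib split_def sum_distrib_left mult_ac of_nat_diff)
     (rule sum.swap)

lemma sum_Ptrans_eq_1: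
  assumes "N \<ge> 2" and "q \<in> paulis N"
  shows "(\<Sum>p\<in>paulis N. Ptrans N q p) = 1"
proof -
  have "(\<Sum>p\<in>paulis N. Ptrans N q p) =
      1 / (real N * (real N - 1)) * (\<Sum>(c, t)\<in>pairs N. \<Sum>p\<in>paulis N. Pct N c t q p)"
    unfolding Ptrans_def by (simp add: sum_distrib_left split_def) (rule sum.swap)
  also have "\<dots> = 1 / (real N * (real N - 1)) * card (pairs N)"
    using qubit_pair.sum_Pct_eq_1[OF qubit_pair_if_pairs assms(2)] by (simp add: split_def)
  also have "\<dots> = 1"
    using assms(1) by (simp add: card_pairs of_nat_diff)
  finally show ?thesis .
qed

lemma nn_integral_xi_sq_apply_gate:
  assumes N: "N \<ge> 2" and "haar \<mu>" and p: "p \<in> paulis N"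
  shows "(\<integral>\<^sup>+g. ennreal ((xi N p (apply_gate N g \<psi>))\<^sup>2) \<partial>gateM N \<mu>) =
    ennreal (\<Sum>q\<in>paulis N. Ptrans N q p * (xi N q \<psi>)\<^sup>2)"
proof -
  interpret haar \<mu> by fact
  interpret U: prob_space \<mu>
    by (rule prob_space_haar)
  interpret UV: prob_space "\<mu> \<Otimes>\<^sub>M \<mu>"
    by (intro prob_space_pair prob_space_haar)
  note [measurable] = borel_measurable_gate_entry[OF sets_haar]
  let ?f = "\<lambda>g. ennreal ((xi N p (apply_gate N g \<psi>))\<^sup>2)"
  let ?P = "\<lambda>(c, t). \<Sum>q\<in>paulis N. Pct N c t q p * (xi N q \<psi>)\<^sup>2"
  have "?f \<in> borel_measurable (gateM N \<mu>)"
  proof (intro measurable_compose[OF _ measurable_ennreal] borel_measurable_power borel_measurable_xi)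
    show "(\<lambda>g. apply_gate N g \<psi> b) \<in> borel_measurable (gateM N \<mu>)" for b
      unfolding apply_gate_eq by measurable
  qed
  then have f_meas: "?f \<in> borel_measurable (measure_pmf (pmf_of_set (pairs N)) \<Otimes>\<^sub>M (\<mu> \<Otimes>\<^sub>M \<mu>))"
    unfolding gateM_def .
  have pair: "(\<integral>\<^sup>+UV. ?f (ct, UV) \<partial>(\<mu> \<Otimes>\<^sub>M \<mu>)) = ennreal (?P ct)" if ct: "ct \<in> pairs N" for ct
  proof -
    obtain c t where ct_eq: "ct = (c, t)"
      by fastforce
    interpret qubit_pair N c t
      using ct ct_eq by (simp add: qubit_pair_if_pairs)
    have "(\<integral>\<^sup>+UV. ?f (ct, UV) \<partial>(\<mu> \<Otimes>\<^sub>M \<mu>)) = (\<integral>\<^sup>+U. \<integral>\<^sup>+V. ?f (ct, (U, V)) \<partial>\<mu> \<partial>\<mu>)"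
      by (rule U.nn_integral_fst[symmetric]) (rule measurable_Pair2[OF f_meas], simp)
    also have "\<dots> = ennreal (?P ct)"
      unfolding ct_eq apply_gate_def using nn_integral_xi_sq_gate_op[OF \<open>haar \<mu>\<close> p] by simp
    finally show ?thesis .
  qed
  have "(\<integral>\<^sup>+g. ?f g \<partial>gateM N \<mu>) =
      (\<integral>\<^sup>+ct. (\<integral>\<^sup>+UV. ?f (ct, UV) \<partial>(\<mu> \<Otimes>\<^sub>M \<mu>)) \<partial>measure_pmf (pmf_of_set (pairs N)))"
    unfolding gateM_def by (rule UV.nn_integral_fst[symmetric, OF f_meas])
  also have "\<dots> = (\<Sum>ct\<in>pairs N. ennreal (?P ct)) / card (pairs N)"
    by (simp add: nn_integral_pmf_of_set pairs_nonempty[OF N] finite_pairs pair cong: sum.cong)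
  also have "\<dots> = ennreal ((\<Sum>ct\<in>pairs N. ?P ct) / card (pairs N))"
    using pairs_nonempty[OF N] finite_pairs
    by (simp add: sum_ennreal ennreal_of_nat_eq_real_of_nat divide_ennreal sum_nonneg split_def
        qubit_pair.Pct_nonneg[OF qubit_pair_if_pairs] card_gt_0_iff)
  also have "\<dots> = ennreal (\<Sum>q\<in>paulis N. Ptrans N q p * (xi N q \<psi>)\<^sup>2)"
    using sum_Ptrans_mult[OF N] by simp
  finally show ?thesis .
qed

lemma sum_paulis_prod:
  fixes g :: "nat \<Rightarrow> pauli \<Rightarrow> 'a::comm_semiring_1"
  shows "(\<Sum>p\<in>paulis N. \<Prod>i\<in>{1..N}. g i (p i)) = (\<Prod>i\<in>{1..N}. \<Sum>a\<in>UNIV. g i a)"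
proof -
  let ?ext = "\<lambda>h i. if i \<in> {1..N} then h i else P0"
  have inj: "inj_on ?ext (PiE {1..N} (\<lambda>_. UNIV))"
    by (rule inj_onI) (metis (no_types, lifting) PiE_ext)
  have "(\<Sum>p\<in>paulis N. \<Prod>i\<in>{1..N}. g i (p i)) = (\<Sum>h\<in>PiE {1..N} (\<lambda>_. UNIV). \<Prod>i\<in>{1..N}. g i (h i))"
    unfolding paulis_eq_PiE_dflt dflt_image_PiE[symmetric] sum.reindex[OF inj]
    by (intro sum.cong refl prod.cong) auto
  also have "\<dots> = (\<Prod>i\<in>{1..N}. \<Sum>a\<in>UNIV. g i a)"
    by (rule prod_sum_PiE[symmetric]) auto
  finally show ?thesis .
qed

lemma sum_sigma_mult_cnj:
  "(\<Sum>a\<in>UNIV. sigma a u v * cnj (sigma a w z)) = (if u = w \<and> v = z then 2 else 0)"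
  by (cases u; cases v; cases w; cases z) (simp_all add: sum_UNIV_pauli)

lemma sum_pauli_op_mult_cnj:
  assumes "b \<in> bits N" "b' \<in> bits N" "e \<in> bits N" "e' \<in> bits N"
  shows "(\<Sum>p\<in>paulis N. pauli_op N p b b' * cnj (pauli_op N p e e')) = (if b = e \<and> b' = e' then 2 ^ N else 0)"
proof -
  have "(\<Sum>p\<in>paulis N. pauli_op N p b b' * cnj (pauli_op N p e e'))
      = (\<Sum>p\<in>paulis N. \<Prod>i\<in>{1..N}. sigma (p i) (b i) (b' i) * cnj (sigma (p i) (e i) (e' i)))"
    unfolding pauli_op_def by (simp add: prod.distrib cnj_prod)
  also have "\<dots> = (\<Prod>i\<in>{1..N}. \<Sum>a\<in>UNIV. sigma a (b i) (b' i) * cnj (sigma a (e i) (e' i)))"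
    by (rule sum_paulis_prod)
  also have "\<dots> = (\<Prod>i\<in>{1..N}. if b i = e i \<and> b' i = e' i then 2 else 0)"
    by (simp add: sum_sigma_mult_cnj)
  also have "\<dots> = (if b = e \<and> b' = e' then 2 ^ N else 0)"
  proof (cases "b = e \<and> b' = e'")
    case False
    then obtain i where "b i \<noteq> e i \<or> b' i \<noteq> e' i"
      by (auto simp: fun_eq_iff)
    moreover then have "i \<in> {1..N}"
      using assms by (auto simp: bits_def)
    ultimately show ?thesis
      using False by (auto intro!: prod_zero)
  qed simp
  finally show ?thesis .
qed

lemma cnj_pauli_expect: "cnj (pauli_expect N p \<psi>) = pauli_expect N p \<psi>"
proof -
  have "cnj (pauli_op N p b b') = pauli_op N p b' b" for b b'
    unfolding pauli_op_def by (simp add: cnj_prod cnj_sigma)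
  then have "cnj (pauli_expect N p \<psi>) = (\<Sum>b\<in>bits N. \<Sum>b'\<in>bits N. pauli_op N p b' b * (\<psi> b * cnj (\<psi> b')))"
    unfolding pauli_expect_def by (simp add: mult_ac)
  also have "\<dots> = pauli_expect N p \<psi>"
    unfolding pauli_expect_def by (rule sum.swap)
  finally show ?thesis .
qed

lemma sum_pauli_expect_norm_sq:
  "(\<Sum>p\<in>paulis N. pauli_expect N p \<psi> * cnj (pauli_expect N p \<psi>)) =
    2 ^ N * (\<Sum>b\<in>bits N. complex_of_real ((cmod (\<psi> b))\<^sup>2))\<^sup>2"
proof -
  let ?w = "\<lambda>b b' e e'. \<psi> b' * cnj (\<psi> b) * cnj (\<psi> e') * \<psi> e"
  have "(\<Sum>p\<in>paulis N. pauli_expect N p \<psi> * cnj (pauli_expect N p \<psi>)) =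
      (\<Sum>p\<in>paulis N. \<Sum>e\<in>bits N. \<Sum>e'\<in>bits N. \<Sum>b\<in>bits N. \<Sum>b'\<in>bits N.
        pauli_op N p b b' * cnj (pauli_op N p e e') * ?w b b' e e')"
    unfolding pauli_expect_def cnj_sum sum_distrib_right sum_distrib_left by (simp add: mult_ac)
  also have "\<dots> = (\<Sum>e\<in>bits N. \<Sum>e'\<in>bits N. \<Sum>b\<in>bits N. \<Sum>b'\<in>bits N.
        (\<Sum>p\<in>paulis N. pauli_op N p b b' * cnj (pauli_op N p e e')) * ?w b b' e e')"
    by (simp only: sum.swap[of _ "paulis N"] sum_distrib_right)
  also have "\<dots> = (\<Sum>e\<in>bits N. \<Sum>e'\<in>bits N. \<Sum>b\<in>bits N. \<Sum>b'\<in>bits N.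
        if b' = e' then if b = e then 2 ^ N * ?w e e' e e' else 0 else 0)"
    by (intro sum.cong refl) (auto simp: sum_pauli_op_mult_cnj)
  also have "\<dots> = (\<Sum>e\<in>bits N. \<Sum>e'\<in>bits N. 2 ^ N * ?w e e' e e')"
    by (simp add: finite_bits)
  also have "\<dots> = 2 ^ N * (\<Sum>b\<in>bits N. complex_of_real ((cmod (\<psi> b))\<^sup>2))\<^sup>2"
    unfolding complex_norm_square by (simp add: power2_eq_square sum_product sum_distrib_left mult_ac)
  finally show ?thesis .
qed

lemma sum_xi_sq_eq_1:
  assumes "normalized N \<psi>"
  shows "(\<Sum>p\<in>paulis N. (xi N p \<psi>)\<^sup>2) = 1"
proof -
  have "(Re z)\<^sup>2 = Re (z * cnj z)" if "cnj z = z" for z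
    using that by (simp add: power2_eq_square complex_eq_iff)
  then have "(\<Sum>p\<in>paulis N. (xi N p \<psi>)\<^sup>2) =
      (2 powr (- real N / 2))\<^sup>2 * Re (\<Sum>p\<in>paulis N. pauli_expect N p \<psi> * cnj (pauli_expect N p \<psi>))"
    unfolding xi_eq_pauli_expect power_mult_distrib Re_sum sum_distrib_left by (simp add: cnj_pauli_expect)
  also have "\<dots> = 2 powr (- real N) * 2 ^ N"
  proof -
    have "(2 powr (- real N / 2))\<^sup>2 = (2::real) powr (- real N)"
      by (subst powr_power) simp_all
    then show ?thesis
      using assms unfolding sum_pauli_expect_norm_sq normalized_def
      by (simp add: of_real_sum[symmetric] del: of_real_sum)
  qed
  also have "\<dots> = 1"
    by (simp add: powr_minus powr_realpow)
  finally show ?thesis .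
qed

lemma psi_cong: "(\<And>k. k < n \<Longrightarrow> \<omega> k = \<omega>' k) \<Longrightarrow> psi N \<psi>0 \<omega> n = psi N \<psi>0 \<omega>' n"
  by (induction n) auto

locale circuit = haar \<mu> for \<mu> +
  fixes N :: nat and \<psi>0 :: state
  assumes two_le_N: "N \<ge> 2"
begin

abbreviation gate_laws :: "nat \<Rightarrow> gate measure" where
  "gate_laws \<equiv> \<lambda>_. gateM N \<mu>"

sublocale gates: product_prob_space gate_laws UNIV
  by (intro product_prob_spaceI prob_space_gateM two_le_N prob_space_haar)

lemma borel_measurable_psi:
  "{..<n} \<subseteq> J \<Longrightarrow> (\<lambda>\<omega>. psi N \<psi>0 \<omega> n b) \<in> borel_measurable (PiM J gate_laws)"
proof (induction n arbitrary: b)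
  case (Suc n)
  note [measurable] = borel_measurable_gate_entry[OF sets_haar]
  have [measurable]: "(\<lambda>\<omega>. psi N \<psi>0 \<omega> n b) \<in> borel_measurable (PiM J gate_laws)" for b
    using Suc.prems by (intro Suc.IH) auto
  have "n \<in> J"
    using Suc.prems by auto
  then have [measurable]: "(\<lambda>\<omega>. gate_entry N b b' (\<omega> n)) \<in> borel_measurable (PiM J gate_laws)" for b b'
    by (intro measurable_compose[OF measurable_component_singleton]) measurable
  show ?case
    unfolding psi.simps apply_gate_eq by measurable
qed simp

definition xi_sq :: "nat \<Rightarrow> (nat \<Rightarrow> pauli) \<Rightarrow> (nat \<Rightarrow> gate) \<Rightarrow> ennreal" where
  "xi_sq n p \<omega> = ennreal ((xi N p (psi N \<psi>0 \<omega> n))\<^sup>2)"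

definition nn_moment :: "nat \<Rightarrow> (nat \<Rightarrow> pauli) \<Rightarrow> ennreal" where
  "nn_moment n p = (\<integral>\<^sup>+\<omega>. xi_sq n p \<omega> \<partial>circM N \<mu>)"

lemma borel_measurable_xi_sq: "{..<n} \<subseteq> J \<Longrightarrow> xi_sq n p \<in> borel_measurable (PiM J gate_laws)"
  unfolding xi_sq_def
  by (intro measurable_compose[OF _ measurable_ennreal] borel_measurable_power borel_measurable_xi
      borel_measurable_psi)

lemma nn_moment_restrict: "nn_moment n p = (\<integral>\<^sup>+\<omega>. xi_sq n p \<omega> \<partial>PiM {..<n} gate_laws)"
proof -
  have "nn_moment n p = (\<integral>\<^sup>+\<omega>. xi_sq n p (restrict \<omega> {..<n}) \<partial>PiM UNIV gate_laws)"
    unfolding nn_moment_def circM_def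
  proof (intro nn_integral_cong)
    fix \<omega> :: "nat \<Rightarrow> gate"
    have "psi N \<psi>0 (restrict \<omega> {..<n}) n = psi N \<psi>0 \<omega> n"
      by (rule psi_cong) simp
    then show "xi_sq n p \<omega> = xi_sq n p (restrict \<omega> {..<n})"
      unfolding xi_sq_def by simp
  qed
  also have "\<dots> = (\<integral>\<^sup>+\<omega>. xi_sq n p \<omega> \<partial>distr (PiM UNIV gate_laws) (PiM {..<n} gate_laws) (\<lambda>\<omega>. restrict \<omega> {..<n}))"
    by (rule nn_integral_distr[symmetric], rule measurable_restrict_subset, simp_all add: borel_measurable_xi_sq)
  also have "\<dots> = (\<integral>\<^sup>+\<omega>. xi_sq n p \<omega> \<partial>PiM {..<n} gate_laws)"
    by (simp add: gates.distr_PiM_restrict_finite)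
  finally show ?thesis .
qed

lemma nn_moment_Suc:
  assumes p: "p \<in> paulis N"
  shows "nn_moment (Suc n) p = (\<Sum>q\<in>paulis N. ennreal (Ptrans N q p) * nn_moment n q)"
proof -
  have [measurable]: "xi_sq n q \<in> borel_measurable (PiM {..<n} gate_laws)" for q
    by (rule borel_measurable_xi_sq) simp
  have step: "(\<integral>\<^sup>+y. xi_sq (Suc n) p (x(n := y)) \<partial>gateM N \<mu>) =
      (\<Sum>q\<in>paulis N. ennreal (Ptrans N q p) * xi_sq n q x)" for x
  proof -
    have "psi N \<psi>0 (x(n := y)) n = psi N \<psi>0 x n" for y
      by (rule psi_cong) auto
    then have "(\<integral>\<^sup>+y. xi_sq (Suc n) p (x(n := y)) \<partial>gateM N \<mu>) =
        ennreal (\<Sum>q\<in>paulis N. Ptrans N q p * (xi N q (psi N \<psi>0 x n))\<^sup>2)"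
      unfolding xi_sq_def using nn_integral_xi_sq_apply_gate[OF two_le_N haar_axioms p] by simp
    then show ?thesis
      unfolding xi_sq_def by (simp add: sum_ennreal[symmetric] ennreal_mult Ptrans_nonneg)
  qed
  have "nn_moment (Suc n) p = (\<integral>\<^sup>+\<omega>. xi_sq (Suc n) p \<omega> \<partial>PiM (insert n {..<n}) gate_laws)"
    unfolding nn_moment_restrict lessThan_Suc ..
  also have "\<dots> = (\<integral>\<^sup>+x. \<integral>\<^sup>+y. xi_sq (Suc n) p (x(n := y)) \<partial>gateM N \<mu> \<partial>PiM {..<n} gate_laws)"
    by (rule gates.product_nn_integral_insert) (auto intro: borel_measurable_xi_sq)
  also have "\<dots> = (\<Sum>q\<in>paulis N. ennreal (Ptrans N q p) * nn_moment n q)"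
    unfolding step nn_moment_restrict by (simp add: nn_integral_sum nn_integral_cmult)
  finally show ?thesis .
qed

lemma nn_moment_eq_Exi2:
  assumes "p \<in> paulis N"
  shows "nn_moment n p = ennreal (Exi2 N \<mu> \<psi>0 n p)"
proof -
  have finite: "nn_moment n p < \<top>" if "p \<in> paulis N" for p
    using that
  proof (induction n arbitrary: p)
    case 0
    then show ?case
      by (simp add: nn_moment_def xi_sq_def circM_def gates.emeasure_space_1)
  next
    case (Suc n)
    then show ?case
      by (auto simp: nn_moment_Suc ennreal_mult_less_top finite_paulis)
  qed
  have "(\<lambda>\<omega>. (xi N p (psi N \<psi>0 \<omega> n))\<^sup>2) \<in> borel_measurable (circM N \<mu>)"
    unfolding circM_def by (intro borel_measurable_power borel_measurable_xi borel_measurable_psi) simp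
  then have "Exi2 N \<mu> \<psi>0 n p = enn2real (nn_moment n p)"
    unfolding Exi2_def nn_moment_def xi_sq_def by (rule integral_eq_nn_integral) simp
  then show ?thesis
    using finite[OF assms] by simp
qed

lemma Exi2_nonneg: "Exi2 N \<mu> \<psi>0 n p \<ge> 0"
  unfolding Exi2_def by (rule integral_nonneg_AE) simp

lemma Exi2_Suc:
  assumes p: "p \<in> paulis N"
  shows "Exi2 N \<mu> \<psi>0 (Suc n) p = (\<Sum>q\<in>paulis N. Ptrans N q p * Exi2 N \<mu> \<psi>0 n q)"
proof -
  have "ennreal (Exi2 N \<mu> \<psi>0 (Suc n) p) = (\<Sum>q\<in>paulis N. ennreal (Ptrans N q p) * ennreal (Exi2 N \<mu> \<psi>0 n q))"
    using nn_moment_Suc[OF p] nn_moment_eq_Exi2 p by simp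
  also have "\<dots> = ennreal (\<Sum>q\<in>paulis N. Ptrans N q p * Exi2 N \<mu> \<psi>0 n q)"
    by (simp add: sum_ennreal[symmetric] ennreal_mult Ptrans_nonneg Exi2_nonneg)
  finally show ?thesis
    by (simp add: Exi2_nonneg Ptrans_nonneg sum_nonneg)
qed

lemma sum_Exi2_eq_1:
  assumes "normalized N \<psi>0"
  shows "(\<Sum>p\<in>paulis N. Exi2 N \<mu> \<psi>0 n p) = 1"
proof (induction n)
  case 0
  show ?case
    unfolding Exi2_def by (simp add: gates.P.prob_space circM_def sum_xi_sq_eq_1[OF assms])
next
  case (Suc n)
  have "(\<Sum>p\<in>paulis N. Exi2 N \<mu> \<psi>0 (Suc n) p) = (\<Sum>q\<in>paulis N. (\<Sum>p\<in>paulis N. Ptrans N q p) * Exi2 N \<mu> \<psi>0 n q)"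
    by (simp add: Exi2_Suc sum_distrib_right cong: sum.cong) (rule sum.swap)
  also have "\<dots> = 1"
    using Suc.IH by (simp add: sum_Ptrans_eq_1[OF two_le_N])
  finally show ?case .
qed

end

theorem mainTheorem3:
  fixes N :: nat and \<mu> :: "mat2 measure" and \<psi>0 :: state
  assumes "N \<ge> 2" and "is_haar \<mu>" and "normalized N \<psi>0"
  shows "(\<forall>n. (\<forall>p\<in>paulis N. Exi2 N \<mu> \<psi>0 n p \<ge> 0) \<and> (\<Sum>p\<in>paulis N. Exi2 N \<mu> \<psi>0 n p) = 1)
       \<and> (\<forall>n. \<forall>p\<in>paulis N. Exi2 N \<mu> \<psi>0 (Suc n) p = (\<Sum>q\<in>paulis N. Ptrans N q p * Exi2 N \<mu> \<psi>0 n q))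
       \<and> (\<forall>\<psi> c t p. normalized N \<psi> \<longrightarrow> (c, t) \<in> pairs N \<longrightarrow> p \<in> paulis N \<longrightarrow>
            (\<integral>U. (\<integral>V. (xi N p (mat_vec N (gate_op N c t U V) \<psi>))\<^sup>2 \<partial>\<mu>) \<partial>\<mu>)
              = (\<Sum>q\<in>paulis N. Pct N c t q p * (xi N q \<psi>)\<^sup>2))"
proof -
  interpret circuit \<mu> N \<psi>0
    using assms(1,2) by unfold_locales
  show ?thesis
    using Exi2_nonneg sum_Exi2_eq_1[OF assms(3)] Exi2_Suc
      qubit_pair.integral_xi_sq_gate_op[OF qubit_pair_if_pairs haar_axioms] by blast
qed

end
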